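(* Let $p$ be a positive integer and let $a_1,\ldots,a_{2p-1}$ be real, distinct, non-zero numbers, with $A_j:=A(a_j)$, $P_a$ and $M_{m,p,a}$ as defined below. For each integer $m\ge0$, the Fischer operator $F_a:\mathcal P_m\to\mathcal P_m$, $F_a(q):=\Delta^p(P_aq)$, is a bijection if and only if $\det M_{m,p,a}\neq0$. Moreover, there is a constant $C\ge0$, independent of $m$, such that whenever $\det M_{m,p,a}\ne0$, $$\|P_aq\|\leq\frac{C}{|\det M_{m,p,a}|}\,\|\Delta^p(P_aq)\|\quad\text{for all } q\in\mathcal P_m.$$
   Context: $\mathcal P_m$ is the space of homogeneous polynomials of degree $m$ in $(x,y)$ with complex coefficients. $\|\cdot\|$ is the norm of the real Fischer inner product $\langle f,g\rangle=\int_{\mathbb R^2}f(x,y)\overline{g(x,y)}e^{-(x^2+y^2)}\,dx\,dy$ on $\mathbb C[x,y]$. $\Delta=\partial_x^2+\partial_y^2$. For real $a$, $A(a):=\frac{a+i}{a-i}$. $P_a(x,y):=y\prod_{j=1}^{2p-1}(x-a_jy)$. For $m\ge0$, $M_{m,p,a}$ is the $2p\times2p$ matrix whose first row is $(1,\ldots,1)$ and whose $(j+1)$-th row, $j=1,\ldots,2p-1$, is $(1,A_j,\ldots,A_j^{p-1},A_j^{m+p+1},\ldots,A_j^{m+2p})$. *)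

theory Defs
  imports "HOL-Analysis.Analysis" "HOL-Computational_Algebra.Polynomial"
    "Jordan_Normal_Form.Determinant"
begin

text \<open>Polynomials in two variables (x,y) with complex coefficients, represented as
  polynomials in x whose coefficients are polynomials in y: the monomial x^i y^j
  has coefficient  coeff (coeff P i) j.\<close>

type_synonym bpoly = "complex poly poly"

definition bX :: bpoly where "bX = [:0, 1:]"
definition bY :: bpoly where "bY = [:[:0, 1:]:]"
definition bconst :: "complex \<Rightarrow> bpoly" where "bconst c = [:[:c:]:]"

definition beval :: "bpoly \<Rightarrow> real \<Rightarrow> real \<Rightarrow> complex" where
  "beval P x y = poly (map_poly (\<lambda>c. poly c (complex_of_real y)) P) (complex_of_real x)"

definition homog_polys :: "nat \<Rightarrow> bpoly set" where
  "homog_polys m = {P. \<forall>i j. coeff (coeff P i) j \<noteq> 0 \<longrightarrow> i + j = m}"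

definition laplace :: "bpoly \<Rightarrow> bpoly" where
  "laplace P = pderiv (pderiv P) + map_poly (\<lambda>c. pderiv (pderiv c)) P"

definition fischer_norm :: "bpoly \<Rightarrow> real" where
  "fischer_norm P = sqrt (integral\<^sup>L (lborel :: (real \<times> real) measure)
      (\<lambda>(x, y). (cmod (beval P x y))\<^sup>2 * exp (- (x\<^sup>2 + y\<^sup>2))))"

definition Amap :: "real \<Rightarrow> complex" where
  "Amap a = (complex_of_real a + \<i>) / (complex_of_real a - \<i>)"

definition Pa :: "nat \<Rightarrow> (nat \<Rightarrow> real) \<Rightarrow> bpoly" where
  "Pa p a = bY * (\<Prod>j\<in>{1..2*p-1}. bX - bconst (complex_of_real (a j)) * bY)"

text \<open>The 2p x 2p matrix M_{m,p,a} (rows/columns indexed from 0): row 0 is all ones;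
  row j (1 \<le> j \<le> 2p-1) is (1, A_j, ..., A_j^(p-1), A_j^(m+p+1), ..., A_j^(m+2p)).\<close>
definition Mmat :: "nat \<Rightarrow> nat \<Rightarrow> (nat \<Rightarrow> real) \<Rightarrow> complex mat" where
  "Mmat m p a = mat (2*p) (2*p) (\<lambda>(i, k).
      if i = 0 then 1
      else if k < p then Amap (a i) ^ k
      else Amap (a i) ^ (m + 1 + k))"

end

theory Submission
  imports Defs "HOL-Probability.Distributions"
begin

text \<open>
  In the coordinates z = x + iy, zbar = x - iy the Laplacian is 4 d/dz d/dzbar, so it acts
  diagonally on the basis z^j zbar^(N-j) of P_N; this basis is moreover orthogonal for the Fischer
  product, with squared norms pi N!. Write P_a q = sum_j c_j z^j zbar^(N-j), N = m + 2p. Then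
  Delta^p (P_a q) = sum_{p <= j <= m+p} lambda_j c_j z^(j-p) zbar^(m+p-j) with
  lambda_j = 4^p j(j-1)...(j-p+1) (N-j)(N-j-1)...(N-j-p+1) > 0, so F_a q determines exactly the
  middle coefficients c_p, ..., c_{m+p}.

  The 2p outer coefficients are tied to the middle ones by the divisibility of P_a q by y and by
  the x - a_r y: as z/zbar = A(x) on the line y = 1, the vanishing of P_a q at (1, 0) and (a_r, 1)
  reads sum_j c_j A_r^j = 0 (A_0 = 1), a linear system for the outer coefficients with matrix
  M_{m,p,a}. If det M_{m,p,a} is non-zero, the outer coefficients are determined by the middle
  ones, so F_a is injective and hence bijective. Otherwise a left null vector of M_{m,p,a} yields,
  by a Vandermonde argument, a non-trivial linear relation among the middle coefficients of every
  P_a q, so some z^i zbar^(m-i) is not in the range.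

  For the estimate, Cramer's rule for a matrix with entries of modulus one bounds each outer
  coefficient by (2p)!/|det M_{m,p,a}| times the l^1 norm of the middle ones, and
  lambda_j >= (4 j (N-j) / p^2)^p gives sum_j lambda_j^(-2) = O(N^(-2p)), which compensates the
  factor N!/m! <= N^(2p) between the two Fischer norms.
\<close>

section \<open>Wirtinger derivatives\<close>

lemma bconst_0 [simp]: "bconst 0 = 0" and bconst_1 [simp]: "bconst 1 = 1"
  by (simp_all add: bconst_def one_pCons)

lemma bconst_add: "bconst (a + b) = bconst a + bconst b"
  and bconst_diff: "bconst (a - b) = bconst a - bconst b"
  and bconst_minus: "bconst (- a) = - bconst a"
  and bconst_mult: "bconst (a * b) = bconst a * bconst b"
  by (simp_all add: bconst_def)

lemma bconst_of_nat: "bconst (of_nat n) = of_nat n"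
  by (induction n) (auto simp: bconst_add)

lemma bconst_sum: "bconst (\<Sum>i\<in>A. f i) = (\<Sum>i\<in>A. bconst (f i))"
  by (induction A rule: infinite_finite_induct) (auto simp: bconst_add)

definition pderiv_y :: "bpoly \<Rightarrow> bpoly" where
  "pderiv_y P = map_poly pderiv P"

lemma coeff_pderiv_y: "coeff (pderiv_y P) n = pderiv (coeff P n)"
  unfolding pderiv_y_def by (simp add: coeff_map_poly)

lemma pderiv_y_0 [simp]: "pderiv_y 0 = 0"
  by (rule poly_eqI) (simp add: coeff_pderiv_y)

lemma pderiv_y_add: "pderiv_y (P + Q) = pderiv_y P + pderiv_y Q"
  by (rule poly_eqI) (simp add: coeff_pderiv_y pderiv_add)

lemma pderiv_y_diff: "pderiv_y (P - Q) = pderiv_y P - pderiv_y Q"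
  by (rule poly_eqI) (simp add: coeff_pderiv_y pderiv_diff)

lemma pderiv_y_sum: "pderiv_y (\<Sum>i\<in>A. f i) = (\<Sum>i\<in>A. pderiv_y (f i))"
  by (induction A rule: infinite_finite_induct) (auto simp: pderiv_y_add)

lemma pderiv_y_mult: "pderiv_y (P * Q) = pderiv_y P * Q + P * pderiv_y Q"
proof (rule poly_eqI)
  have pderiv_sum: "pderiv (\<Sum>i\<in>A. f i) = (\<Sum>i\<in>A. pderiv (f i))"
    for A and f :: "nat \<Rightarrow> complex poly"
    by (induction A rule: infinite_finite_induct) (auto simp: pderiv_add)
  show "coeff (pderiv_y (P * Q)) n = coeff (pderiv_y P * Q + P * pderiv_y Q) n" for n
    by (simp add: coeff_pderiv_y coeff_mult pderiv_sum pderiv_mult flip: sum.distrib)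
      (rule sum.cong, auto simp: ac_simps)
qed

lemma pderiv_bconst [simp]: "pderiv (bconst c) = 0"
  by (simp add: bconst_def)

lemma pderiv_y_bconst [simp]: "pderiv_y (bconst c) = 0"
  by (rule poly_eqI) (simp add: coeff_pderiv_y bconst_def coeff_pCons split: nat.splits)

lemma pderiv_bconst_mult: "pderiv (bconst c * P) = bconst c * pderiv P"
  by (simp add: pderiv_mult)

lemma pderiv_y_bconst_mult: "pderiv_y (bconst c * P) = bconst c * pderiv_y P"
  by (simp add: pderiv_y_mult)

lemma pderiv_bX [simp]: "pderiv bX = 1"
  by (simp add: bX_def pderiv_pCons)

lemma pderiv_y_bX [simp]: "pderiv_y bX = 0"
  by (rule poly_eqI) (simp add: coeff_pderiv_y bX_def coeff_pCons split: nat.splits)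

lemma pderiv_bY [simp]: "pderiv bY = 0"
  by (simp add: bY_def)

lemma pderiv_y_bY [simp]: "pderiv_y bY = 1"
  by (rule poly_eqI)
    (simp add: coeff_pderiv_y bY_def coeff_pCons pderiv_pCons one_pCons split: nat.splits)

lemma pderiv_pderiv_y_commute: "pderiv (pderiv_y P) = pderiv_y (pderiv P)"
  by (rule poly_eqI) (simp add: coeff_pderiv_y coeff_pderiv pderiv_smult[symmetric] of_nat_poly)

lemma laplace_eq_pderiv_pderiv_y: "laplace P = pderiv (pderiv P) + pderiv_y (pderiv_y P)"
  unfolding laplace_def pderiv_y_def by (simp add: map_poly_map_poly o_def)

definition dz :: "bpoly \<Rightarrow> bpoly" where
  "dz P = bconst (1/2) * (pderiv P - bconst \<i> * pderiv_y P)"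

definition dzbar :: "bpoly \<Rightarrow> bpoly" where
  "dzbar P = bconst (1/2) * (pderiv P + bconst \<i> * pderiv_y P)"

lemma dz_mult: "dz (P * Q) = dz P * Q + P * dz Q"
  by (simp add: dz_def pderiv_mult pderiv_y_mult algebra_simps)

lemma dzbar_mult: "dzbar (P * Q) = dzbar P * Q + P * dzbar Q"
  by (simp add: dzbar_def pderiv_mult pderiv_y_mult algebra_simps)

lemma dz_bconst [simp]: "dz (bconst c) = 0"
  by (simp add: dz_def)

lemma dzbar_bconst [simp]: "dzbar (bconst c) = 0"
  by (simp add: dzbar_def)

lemma dz_1 [simp]: "dz 1 = 0" and dzbar_1 [simp]: "dzbar 1 = 0"
  using dz_bconst[of 1] dzbar_bconst[of 1] by simp_all

lemma dz_power: "dz (P ^ n) = of_nat n * P ^ (n - 1) * dz P"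
  by (induction n) (auto simp: dz_mult algebra_simps power_eq_if)

lemma dzbar_power: "dzbar (P ^ n) = of_nat n * P ^ (n - 1) * dzbar P"
  by (induction n) (auto simp: dzbar_mult algebra_simps power_eq_if)

lemma laplace_eq_dz_dzbar: "laplace P = 4 * dz (dzbar P)"
proof -
  define h where "h = bconst (1/2)"
  define I where "I = bconst \<i>"
  have II: "I * I = - 1"
    unfolding I_def by (simp flip: bconst_mult add: bconst_minus)
  have "4 * (h * h) = bconst 4 * bconst (1/4)"
    using bconst_of_nat[of 4] by (simp add: h_def flip: bconst_mult)
  then have hh: "4 * (h * h) = 1"
    by (simp flip: bconst_mult)
  have "dz (dzbar P) = h * (h * (pderiv (pderiv P) + I * pderiv_y (pderiv P))
      - I * (h * (pderiv_y (pderiv P) + I * pderiv_y (pderiv_y P))))"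
    by (simp add: dz_def dzbar_def pderiv_bconst_mult pderiv_y_bconst_mult pderiv_add pderiv_y_add
        pderiv_pderiv_y_commute h_def I_def)
  also have "\<dots> = (h * h) * (pderiv (pderiv P) - (I * I) * pderiv_y (pderiv_y P))"
    by (simp add: algebra_simps)
  finally show ?thesis
    using II hh by (simp add: laplace_eq_pderiv_pderiv_y mult.assoc[symmetric])
qed

definition bZ :: bpoly where "bZ = bX + bconst \<i> * bY"
definition bZbar :: bpoly where "bZbar = bX - bconst \<i> * bY"

lemma dz_bZ [simp]: "dz bZ = 1" and dzbar_bZ [simp]: "dzbar bZ = 0"
  and dz_bZbar [simp]: "dz bZbar = 0" and dzbar_bZbar [simp]: "dzbar bZbar = 1"
proof -
  have "bconst \<i> * bconst \<i> = - 1"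
    by (simp add: bconst_minus flip: bconst_mult)
  moreover have "bconst (1/2) * 2 = 1"
    using bconst_of_nat[of 2] bconst_mult[of "1/2" 2] by simp
  ultimately show "dz bZ = 1" "dzbar bZ = 0" "dz bZbar = 0" "dzbar bZbar = 1"
    by (simp_all add: dz_def dzbar_def bZ_def bZbar_def pderiv_add pderiv_diff pderiv_y_add
        pderiv_y_diff pderiv_bconst_mult pderiv_y_bconst_mult)
qed

lemma bX_eq_bZ_bZbar: "bX = bconst (1/2) * (bZ + bZbar)"
proof -
  have "bZ + bZbar = bconst 2 * bX"
    by (simp add: bZ_def bZbar_def bconst_of_nat[of 2, simplified])
  then have "bconst (1/2) * (bZ + bZbar) = bconst (1/2 * 2) * bX"
    by (simp only: bconst_mult mult.assoc)
  then show ?thesis by simp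
qed

lemma bY_eq_bZ_bZbar: "bY = bconst (- \<i> / 2) * (bZ - bZbar)"
proof -
  have "bZ - bZbar = bconst (2 * \<i>) * bY"
    by (simp add: bZ_def bZbar_def bconst_mult bconst_of_nat[of 2, simplified])
  then have "bconst (- \<i> / 2) * (bZ - bZbar) = bconst (- \<i> / 2 * (2 * \<i>)) * bY"
    by (simp only: bconst_mult mult.assoc)
  then show ?thesis by simp
qed

definition zmonom :: "nat \<Rightarrow> nat \<Rightarrow> bpoly" where
  "zmonom N j = bZ ^ j * bZbar ^ (N - j)"

lemma dz_bZ_bZbar_power: "dz (bZ ^ a * bZbar ^ b) = of_nat a * bZ ^ (a - 1) * bZbar ^ b"
  and dzbar_bZ_bZbar_power: "dzbar (bZ ^ a * bZbar ^ b) = of_nat b * bZ ^ a * bZbar ^ (b - 1)"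
  by (simp_all add: dz_mult dzbar_mult dz_power dzbar_power)

lemma laplace_add: "laplace (P + Q) = laplace P + laplace Q"
  by (simp add: laplace_eq_pderiv_pderiv_y pderiv_add pderiv_y_add)

lemma laplace_bconst_mult: "laplace (bconst c * P) = bconst c * laplace P"
  by (simp only: laplace_eq_pderiv_pderiv_y pderiv_bconst_mult pderiv_y_bconst_mult distrib_left)

lemma laplace_pow_add: "(laplace ^^ k) (P + Q) = (laplace ^^ k) P + (laplace ^^ k) Q"
  by (induction k) (auto simp: laplace_add)

lemma laplace_pow_0 [simp]: "(laplace ^^ k) 0 = 0"
  using laplace_pow_add[of k 0 0] by simp

lemma laplace_pow_diff: "(laplace ^^ k) (P - Q) = (laplace ^^ k) P - (laplace ^^ k) Q"
  using laplace_pow_add[of k "P - Q" Q] by simp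

lemma laplace_pow_bconst_mult: "(laplace ^^ k) (bconst c * P) = bconst c * (laplace ^^ k) P"
  by (induction k) (auto simp: laplace_bconst_mult)

lemma laplace_pow_sum: "(laplace ^^ k) (\<Sum>i\<in>A. f i) = (\<Sum>i\<in>A. (laplace ^^ k) (f i))"
  by (induction A rule: infinite_finite_induct) (auto simp: laplace_pow_add)

lemma laplace_bZ_bZbar_power:
  "laplace (bZ ^ a * bZbar ^ b) = bconst (of_nat (4 * a * b)) * bZ ^ (a - 1) * bZbar ^ (b - 1)"
proof -
  have dz_of_nat_mult: "dz (of_nat n * P) = of_nat n * dz P" for n P
    using dz_mult[of "of_nat n" P] dz_bconst[of "of_nat n"] by (simp add: bconst_of_nat)
  have "laplace (bZ ^ a * bZbar ^ b) = 4 * dz (of_nat b * (bZ ^ a * bZbar ^ (b - 1)))"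
    by (simp add: laplace_eq_dz_dzbar dzbar_bZ_bZbar_power mult.assoc)
  also have "\<dots> = of_nat (4 * a * b) * bZ ^ (a - 1) * bZbar ^ (b - 1)"
    by (simp add: dz_of_nat_mult dz_bZ_bZbar_power mult_ac)
  finally show ?thesis
    unfolding bconst_of_nat .
qed

definition ffact :: "nat \<Rightarrow> nat \<Rightarrow> nat" where
  "ffact n k = (\<Prod>t<k. n - t)"

lemma ffact_Suc: "ffact n (Suc k) = ffact n k * (n - k)"
  by (simp add: ffact_def)

lemma ffact_eq_0_iff: "ffact n k = 0 \<longleftrightarrow> n < k"
  unfolding ffact_def by auto

definition lap_factor :: "nat \<Rightarrow> nat \<Rightarrow> nat \<Rightarrow> nat" where
  "lap_factor p N j = 4 ^ p * ffact j p * ffact (N - j) p"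

lemma lap_factor_pos_iff: "lap_factor p N j > 0 \<longleftrightarrow> p \<le> j \<and> p \<le> N - j"
  unfolding lap_factor_def using ffact_eq_0_iff[of j p] ffact_eq_0_iff[of "N - j" p] by auto

lemma lap_factor_eq_0_iff: "lap_factor p N j = 0 \<longleftrightarrow> j < p \<or> N - j < p"
  unfolding lap_factor_def by (auto simp: ffact_eq_0_iff)

lemma laplace_zmonom:
  "laplace (zmonom N j) = bconst (of_nat (4 * j * (N - j))) * zmonom (N - 2) (j - 1)"
proof (cases "1 \<le> j \<and> 1 \<le> N - j")
  case True
  then have "N - j - 1 = N - 2 - (j - 1)" by simp
  then show ?thesis unfolding zmonom_def laplace_bZ_bZbar_power by (simp add: mult.assoc)
next
  case False
  then have "4 * j * (N - j) = 0" by auto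
  then show ?thesis
    unfolding zmonom_def laplace_bZ_bZbar_power by (simp only: of_nat_0 bconst_0 mult_zero_left)
qed

lemma laplace_pow_zmonom:
  "(laplace ^^ k) (zmonom N j) = bconst (of_nat (lap_factor k N j)) * zmonom (N - 2 * k) (j - k)"
proof (induction k)
  case 0
  then show ?case by (simp add: lap_factor_def ffact_def)
next
  case (Suc k)
  have "lap_factor k N j * (4 * (j - k) * (N - 2 * k - (j - k))) = lap_factor (Suc k) N j"
  proof (cases "k \<le> j \<and> k \<le> N - j")
    case True
    then have "N - 2 * k - (j - k) = N - j - k" by simp
    then show ?thesis by (simp add: lap_factor_def ffact_Suc)
  next
    case False
    then show ?thesis by (auto simp: lap_factor_def ffact_eq_0_iff)
  qed
  then show ?case
    by (simp add: Suc laplace_bconst_mult laplace_zmonom mult.assoc diff_diff_add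
        flip: bconst_mult of_nat_mult)
qed

section \<open>Evaluation and homogeneity\<close>

lemma beval_add: "beval (P + Q) x y = beval P x y + beval Q x y"
  and beval_diff: "beval (P - Q) x y = beval P x y - beval Q x y"
  and beval_mult: "beval (P * Q) x y = beval P x y * beval Q x y"
proof -
  define h where "h c = poly c (complex_of_real y)" for c
  have beval_h: "beval P x y = poly (map_poly h P) (complex_of_real x)" for P
    unfolding beval_def h_def by simp
  have coeff_h: "coeff (map_poly h P) n = h (coeff P n)" for P n
    by (simp add: coeff_map_poly h_def)
  have add: "map_poly h (P + Q) = map_poly h P + map_poly h Q"
    and diff: "map_poly h (P - Q) = map_poly h P - map_poly h Q" for P Q
    by (rule poly_eqI, simp add: coeff_h h_def)+
  have mult: "map_poly h (P * Q) = map_poly h P * map_poly h Q" for P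
  proof (induction P)
    case (pCons a P)
    have "map_poly h (pCons a P) = pCons (h a) (map_poly h P)"
      and "map_poly h (Polynomial.smult a Q) = Polynomial.smult (h a) (map_poly h Q)"
      and "map_poly h (pCons 0 (P * Q)) = pCons 0 (map_poly h (P * Q))"
      by (rule poly_eqI, simp add: coeff_h coeff_pCons h_def split: nat.splits)+
    with pCons.IH show ?case
      by (simp add: add)
  qed simp
  show "beval (P + Q) x y = beval P x y + beval Q x y"
    and "beval (P - Q) x y = beval P x y - beval Q x y"
    and "beval (P * Q) x y = beval P x y * beval Q x y"
    unfolding beval_h by (simp_all add: add diff mult)
qed

lemma beval_bconst [simp]: "beval (bconst c) x y = c"
  by (simp add: beval_def bconst_def map_poly_pCons)

lemma beval_0 [simp]: "beval 0 x y = 0" and beval_1 [simp]: "beval 1 x y = 1"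
  using beval_bconst[of 0] beval_bconst[of 1] by simp_all

lemma beval_bX [simp]: "beval bX x y = complex_of_real x"
  and beval_bY [simp]: "beval bY x y = complex_of_real y"
  by (simp_all add: beval_def bX_def bY_def map_poly_pCons)

lemma beval_power: "beval (P ^ n) x y = beval P x y ^ n"
  by (induction n) (auto simp: beval_mult)

lemma beval_prod: "beval (\<Prod>i\<in>A. f i) x y = (\<Prod>i\<in>A. beval (f i) x y)"
  by (induction A rule: infinite_finite_induct) (auto simp: beval_mult)

lemma beval_sum: "beval (\<Sum>i\<in>A. f i) x y = (\<Sum>i\<in>A. beval (f i) x y)"
  by (induction A rule: infinite_finite_induct) (auto simp: beval_add)

lemma beval_bZ [simp]: "beval bZ x y = complex_of_real x + \<i> * complex_of_real y"
  and beval_bZbar [simp]: "beval bZbar x y = complex_of_real x - \<i> * complex_of_real y"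
  by (simp_all add: bZ_def bZbar_def beval_add beval_diff beval_mult)

lemma beval_zmonom:
  "beval (zmonom N j) x y = (complex_of_real x + \<i> * complex_of_real y) ^ j
    * (complex_of_real x - \<i> * complex_of_real y) ^ (N - j)"
  by (simp add: zmonom_def beval_mult beval_power)

lemma homog_polys_0 [simp]: "0 \<in> homog_polys N"
  by (simp add: homog_polys_def)

lemma homog_polys_add: "P \<in> homog_polys N \<Longrightarrow> Q \<in> homog_polys N \<Longrightarrow> P + Q \<in> homog_polys N"
  and homog_polys_diff: "P \<in> homog_polys N \<Longrightarrow> Q \<in> homog_polys N \<Longrightarrow> P - Q \<in> homog_polys N"
  unfolding homog_polys_def by (force+)

lemma homog_polys_sum: "(\<And>i. i \<in> A \<Longrightarrow> f i \<in> homog_polys N) \<Longrightarrow> (\<Sum>i\<in>A. f i) \<in> homog_polys N"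
  by (induction A rule: infinite_finite_induct) (auto intro: homog_polys_add)

lemma homog_polys_mult:
  assumes "P \<in> homog_polys a" "Q \<in> homog_polys b"
  shows "P * Q \<in> homog_polys (a + b)"
  unfolding homog_polys_def
proof (intro CollectI allI impI)
  fix i j
  assume nz: "coeff (coeff (P * Q) i) j \<noteq> 0"
  have "coeff (coeff (P * Q) i) j = (\<Sum>k\<le>i. \<Sum>l\<le>j. coeff (coeff P k) l * coeff (coeff Q (i - k)) (j - l))"
    by (simp add: coeff_mult coeff_sum)
  then obtain k l where "k \<le> i" "l \<le> j" "coeff (coeff P k) l * coeff (coeff Q (i - k)) (j - l) \<noteq> 0"
    using nz by (metis (no_types, lifting) atMost_iff sum.neutral)
  then have "k + l = a" "(i - k) + (j - l) = b" "k \<le> i" "l \<le> j"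
    using assms unfolding homog_polys_def by auto
  then show "i + j = a + b" by linarith
qed

lemma homog_polys_power: "P \<in> homog_polys a \<Longrightarrow> P ^ n \<in> homog_polys (n * a)"
proof (induction n)
  case 0
  then show ?case by (auto simp: homog_polys_def one_pCons coeff_pCons split: nat.splits)
next
  case (Suc n)
  then show ?case using homog_polys_mult[of P a "P ^ n" "n * a"] by simp
qed

lemma homog_polys_bconst: "bconst c \<in> homog_polys 0"
  by (auto simp: homog_polys_def bconst_def coeff_pCons split: nat.splits)

lemma homog_polys_bconst_mult: "P \<in> homog_polys N \<Longrightarrow> bconst c * P \<in> homog_polys N"
  using homog_polys_mult[OF homog_polys_bconst] by fastforce

lemma homog_polys_prod:
  "finite A \<Longrightarrow> (\<And>i. i \<in> A \<Longrightarrow> f i \<in> homog_polys 1) \<Longrightarrow> (\<Prod>i\<in>A. f i) \<in> homog_polys (card A)"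
proof (induction A rule: finite_induct)
  case empty
  then show ?case using homog_polys_bconst[of 1] by simp
next
  case (insert x A)
  then show ?case using homog_polys_mult[of "f x" 1 "\<Prod>i\<in>A. f i" "card A"] by simp
qed

lemma homog_polys_bX: "bX \<in> homog_polys 1"
  and homog_polys_bY: "bY \<in> homog_polys 1"
  by (auto simp: homog_polys_def bX_def bY_def coeff_pCons split: nat.splits)

lemma homog_polys_zmonom:
  assumes "j \<le> N"
  shows "zmonom N j \<in> homog_polys N"
proof -
  have "bZ \<in> homog_polys 1" "bZbar \<in> homog_polys 1"
    unfolding bZ_def bZbar_def
    by (intro homog_polys_add homog_polys_diff homog_polys_bX homog_polys_bconst_mult homog_polys_bY)+
  then have "zmonom N j \<in> homog_polys (j * 1 + (N - j) * 1)"
    unfolding zmonom_def by (intro homog_polys_mult homog_polys_power)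
  then show ?thesis
    using assms by simp
qed

section \<open>The basis z^j zbar^(N-j) of P_N\<close>

definition zcomb :: "nat \<Rightarrow> (nat \<Rightarrow> complex) \<Rightarrow> bpoly" where
  "zcomb N c = (\<Sum>j\<le>N. bconst (c j) * zmonom N j)"

lemma zcomb_in_homog_polys: "zcomb N c \<in> homog_polys N"
  unfolding zcomb_def by (intro homog_polys_sum homog_polys_bconst_mult homog_polys_zmonom) auto

lemma zcomb_cong: "(\<And>i. i \<le> N \<Longrightarrow> c i = d i) \<Longrightarrow> zcomb N c = zcomb N d"
  by (simp add: zcomb_def)

lemma zcomb_add: "zcomb N c + zcomb N d = zcomb N (\<lambda>j. c j + d j)"
  by (simp add: zcomb_def bconst_add distrib_right sum.distrib)

lemma zcomb_diff: "zcomb N c - zcomb N d = zcomb N (\<lambda>j. c j - d j)"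
  by (simp add: zcomb_def bconst_diff left_diff_distrib sum_subtractf)

lemma bconst_mult_zcomb: "bconst a * zcomb N c = zcomb N (\<lambda>j. a * c j)"
  by (simp add: zcomb_def bconst_mult sum_distrib_left mult.assoc)

lemma zcomb_mult_bZ: "zcomb N c * bZ = zcomb (Suc N) (\<lambda>j. if j = 0 then 0 else c (j - 1))"
proof -
  have "zmonom N j * bZ = zmonom (Suc N) (Suc j)" if "j \<le> N" for j
    using that by (simp add: zmonom_def algebra_simps Suc_diff_le)
  then have "zcomb N c * bZ = (\<Sum>j\<le>N. bconst (c j) * zmonom (Suc N) (Suc j))"
    unfolding zcomb_def by (simp add: sum_distrib_right mult.assoc)
  also have "\<dots> = zcomb (Suc N) (\<lambda>j. if j = 0 then 0 else c (j - 1))"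
    unfolding zcomb_def by (subst sum.atMost_Suc_shift) simp
  finally show ?thesis .
qed

lemma zcomb_mult_bZbar: "zcomb N c * bZbar = zcomb (Suc N) (\<lambda>j. if j \<le> N then c j else 0)"
proof -
  have "zmonom N j * bZbar = zmonom (Suc N) j" if "j \<le> N" for j
    using that by (simp add: zmonom_def algebra_simps Suc_diff_le)
  then show ?thesis
    unfolding zcomb_def by (simp add: sum_distrib_right mult.assoc sum.atMost_Suc)
qed

lemma range_zcomb_sum:
  "(\<And>i. i \<in> A \<Longrightarrow> f i \<in> range (zcomb N)) \<Longrightarrow> (\<Sum>i\<in>A. f i) \<in> range (zcomb N)"
proof (induction A rule: infinite_finite_induct)
  case (insert x F)
  then obtain c d where "f x = zcomb N c" "sum f F = zcomb N d"
    by (metis insertCI rangeE)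
  then show ?case
    using insert.hyps by (simp add: zcomb_add)
qed (auto intro!: range_eqI[of _ _ "\<lambda>_. 0"] simp: zcomb_def)

lemma range_zcomb_mult_bX:
  assumes "u \<in> range (zcomb N)"
  shows "u * bX \<in> range (zcomb (Suc N))"
proof -
  obtain c where "u = zcomb N c" using assms by blast
  then have "u * bX = bconst (1/2) * (zcomb N c * bZ) + bconst (1/2) * (zcomb N c * bZbar)"
    by (simp add: bX_eq_bZ_bZbar algebra_simps)
  then show ?thesis
    by (simp add: zcomb_mult_bZ zcomb_mult_bZbar bconst_mult_zcomb zcomb_add)
qed

lemma range_zcomb_mult_bY:
  assumes "u \<in> range (zcomb N)"
  shows "u * bY \<in> range (zcomb (Suc N))"
proof -
  obtain c where "u = zcomb N c" using assms by blast
  then have "u * bY = bconst (- \<i> / 2) * (zcomb N c * bZ) + bconst (\<i> / 2) * (zcomb N c * bZbar)"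
    by (simp add: bY_eq_bZ_bZbar algebra_simps bconst_minus)
  then show ?thesis
    by (simp add: zcomb_mult_bZ zcomb_mult_bZbar bconst_mult_zcomb zcomb_add)
qed

lemma bX_bY_power_in_range_zcomb: "bX ^ i * bY ^ k \<in> range (zcomb (i + k))"
proof (induction k)
  case 0
  show ?case
  proof (induction i)
    case 0
    have "zcomb 0 (\<lambda>_. 1) = 1" by (simp add: zcomb_def zmonom_def)
    then show ?case by (metis rangeI mult_1 power_0 add_0)
  next
    case (Suc i)
    then show ?case using range_zcomb_mult_bX[of "bX ^ i" i] by (simp add: mult.commute)
  qed
next
  case (Suc k)
  then show ?case using range_zcomb_mult_bY[OF Suc] by (simp add: algebra_simps)
qed

lemma bconst_mult_bX_bY_power: "bconst c * bX ^ i * bY ^ k = monom (monom c k) i"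
proof -
  have one: "[:[:1:]:] = (1::bpoly)" by (metis one_pCons)
  have "bX ^ i = monom 1 i" by (simp add: bX_def monom_altdef)
  moreover have "bY ^ k = [:monom 1 k:]"
    by (induction k) (auto simp: bY_def monom_altdef monom_0 one)
  ultimately show ?thesis
    by (simp add: bconst_def monom_altdef smult_monom one)
qed

lemma homog_polys_expand:
  assumes "u \<in> homog_polys N"
  shows "u = (\<Sum>i\<le>N. bconst (coeff (coeff u i) (N - i)) * bX ^ i * bY ^ (N - i))"
proof (rule poly_eqI, rule poly_eqI)
  fix i' j'
  have "coeff (coeff (\<Sum>i\<le>N. bconst (coeff (coeff u i) (N - i)) * bX ^ i * bY ^ (N - i)) i') j'
      = (\<Sum>i\<le>N. if i = i' then (if N - i' = j' then coeff (coeff u i') j' else 0) else 0)"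
    by (simp only: bconst_mult_bX_bY_power coeff_sum) (rule sum.cong, auto simp: coeff_monom)
  also have "\<dots> = (if i' \<le> N \<and> N - i' = j' then coeff (coeff u i') j' else 0)"
    by (simp add: sum.delta)
  also have "\<dots> = coeff (coeff u i') j'"
  proof (cases "i' + j' = N")
    case False
    then show ?thesis
      using assms by (auto simp: homog_polys_def)
  qed auto
  finally show "coeff (coeff u i') j' =
      coeff (coeff (\<Sum>i\<le>N. bconst (coeff (coeff u i) (N - i)) * bX ^ i * bY ^ (N - i)) i') j'"
    by simp
qed

lemma homog_polys_eq_range_zcomb: "homog_polys N = range (zcomb N)"
proof
  show "range (zcomb N) \<subseteq> homog_polys N"
    using zcomb_in_homog_polys by blast
  show "homog_polys N \<subseteq> range (zcomb N)"
  proof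
    fix u
    assume u: "u \<in> homog_polys N"
    have "bconst c * (bX ^ i * bY ^ (N - i)) \<in> range (zcomb N)" if "i \<le> N" for i c
    proof -
      have "i + (N - i) = N" using that by simp
      then obtain d where "bX ^ i * bY ^ (N - i) = zcomb N d"
        using bX_bY_power_in_range_zcomb[of i "N - i"] by (metis rangeE)
      then show ?thesis by (simp add: bconst_mult_zcomb)
    qed
    then have "(\<Sum>i\<le>N. bconst (coeff (coeff u i) (N - i)) * (bX ^ i * bY ^ (N - i))) \<in> range (zcomb N)"
      by (intro range_zcomb_sum) auto
    then show "u \<in> range (zcomb N)"
      using homog_polys_expand[OF u] by (simp add: mult.assoc)
  qed
qed

lemma of_real_minus_i_neq_0: "complex_of_real x - \<i> \<noteq> 0"
  by (auto simp: complex_eq_iff)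

lemma inj_Amap: "inj Amap"
proof (rule injI)
  fix a b
  assume "Amap a = Amap b"
  then have "(complex_of_real a + \<i>) * (complex_of_real b - \<i>)
      = (complex_of_real b + \<i>) * (complex_of_real a - \<i>)"
    unfolding Amap_def using of_real_minus_i_neq_0[of a] of_real_minus_i_neq_0[of b]
    by (simp add: frac_eq_eq)
  then show "a = b" by (simp add: complex_eq_iff algebra_simps)
qed

text \<open>On the line y = 1 the ratio (x + iy) / (x - iy) is A(x); this turns the vanishing of a
  homogeneous polynomial at (a, 1) into a polynomial equation in A(a).\<close>

lemma beval_zcomb_x_1:
  "beval (zcomb N c) x 1 = (complex_of_real x - \<i>) ^ N * (\<Sum>j\<le>N. c j * Amap x ^ j)"
proof -
  have "beval (zmonom N j) x 1 = (complex_of_real x - \<i>) ^ N * Amap x ^ j" if "j \<le> N" for j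
  proof -
    have "(complex_of_real x - \<i>) ^ j \<noteq> 0"
      using of_real_minus_i_neq_0 by simp
    then have A: "Amap x ^ j * (complex_of_real x - \<i>) ^ j = (complex_of_real x + \<i>) ^ j"
      unfolding Amap_def power_divide by simp
    have "(complex_of_real x - \<i>) ^ N = (complex_of_real x - \<i>) ^ j * (complex_of_real x - \<i>) ^ (N - j)"
      using that by (simp flip: power_add)
    then have "(complex_of_real x - \<i>) ^ N * Amap x ^ j
        = (Amap x ^ j * (complex_of_real x - \<i>) ^ j) * (complex_of_real x - \<i>) ^ (N - j)"
      by (simp only: ac_simps)
    then show ?thesis
      unfolding A by (simp add: beval_zmonom)
  qed
  then have "beval (zcomb N c) x 1 = (\<Sum>j\<le>N. c j * ((complex_of_real x - \<i>) ^ N * Amap x ^ j))"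
    unfolding zcomb_def beval_sum beval_mult beval_bconst by (intro sum.cong) auto
  then show ?thesis
    by (simp add: sum_distrib_left ac_simps)
qed

lemma beval_zcomb_1_0: "beval (zcomb N c) 1 0 = (\<Sum>j\<le>N. c j)"
  by (simp add: zcomb_def beval_sum beval_mult beval_zmonom)

lemma zcomb_eq_0_imp:
  assumes "zcomb N c = 0" "j \<le> N"
  shows "c j = 0"
proof -
  define p where "p = (\<Sum>j\<le>N. monom (c j) j)"
  have "poly p (Amap x) = 0" for x
  proof -
    have "(complex_of_real x - \<i>) ^ N * poly p (Amap x) = beval (zcomb N c) x 1"
      by (simp add: beval_zcomb_x_1 p_def poly_sum poly_monom)
    then show ?thesis
      using assms(1) of_real_minus_i_neq_0[of x] by simp
  qed
  then have "range Amap \<subseteq> {z. poly p z = 0}" by auto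
  moreover have "infinite (range Amap)"
    using inj_Amap by (simp add: finite_image_iff infinite_UNIV_char_0)
  ultimately have "p = 0"
    using finite_subset poly_roots_finite by blast
  then have "coeff p j = 0" by simp
  moreover have "coeff p j = c j"
    using assms(2) by (simp add: p_def coeff_sum coeff_monom)
  ultimately show ?thesis by simp
qed

lemma zcomb_indicator:
  assumes "i0 \<le> m"
  shows "zcomb m (\<lambda>i. if i = i0 then 1 else 0) = zmonom m i0"
proof -
  have "zcomb m (\<lambda>i. if i = i0 then 1 else 0) = (\<Sum>i\<le>m. if i = i0 then zmonom m i else 0)"
    unfolding zcomb_def by (intro sum.cong) auto
  then show ?thesis
    using assms by simp
qed

definition zcoord :: "nat \<Rightarrow> bpoly \<Rightarrow> nat \<Rightarrow> complex" where
  "zcoord N u = (SOME c. u = zcomb N c)"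

lemma zcomb_zcoord:
  assumes "u \<in> homog_polys N"
  shows "zcomb N (zcoord N u) = u"
proof -
  obtain c where "u = zcomb N c"
    using assms unfolding homog_polys_eq_range_zcomb by blast
  then show ?thesis
    using someI[of "\<lambda>c. u = zcomb N c" c] by (simp add: zcoord_def)
qed

lemma zcoord_zcomb:
  assumes "j \<le> N"
  shows "zcoord N (zcomb N c) j = c j"
proof -
  have "zcomb N (\<lambda>j. zcoord N (zcomb N c) j - c j) = 0"
    using zcomb_diff[of N "zcoord N (zcomb N c)" c] zcomb_zcoord[OF zcomb_in_homog_polys, of N c]
    by simp
  from zcomb_eq_0_imp[OF this assms] show ?thesis by simp
qed

lemma zcomb_0: "zcomb N (\<lambda>_. 0) = 0"
  by (simp add: zcomb_def)

lemma zcoord_0: "j \<le> N \<Longrightarrow> zcoord N 0 j = 0"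
  using zcoord_zcomb[of j N "\<lambda>_. 0"] by (simp add: zcomb_0)

section \<open>Gaussian integrals and the Fischer norm\<close>

definition gauss_moment :: "nat \<Rightarrow> real" where
  "gauss_moment k = (if even k then sqrt pi * fact k / (2 ^ k * fact (k div 2)) else 0)"

lemma has_bochner_integral_gauss_moment:
  "has_bochner_integral lborel (\<lambda>x::real. exp (- x\<^sup>2) * x ^ k) (gauss_moment k)"
proof (cases "even k")
  case True
  then obtain m where k: "k = 2 * m" by blast
  show ?thesis
    using has_bochner_integral_even_function[OF gaussian_moment_even_pos[where k=m]]
    by (simp add: k gauss_moment_def)
next
  case False
  then obtain m where k: "k = 2 * m + 1" using oddE by blast
  have "has_bochner_integral lborel (\<lambda>x::real. exp (- x\<^sup>2) * x ^ (2 * m + 1)) 0"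
    using gaussian_moment_odd_pos[of m] by (rule has_bochner_integral_odd_function) simp
  then show ?thesis by (simp add: k gauss_moment_def)
qed

lemma gauss_moment_0: "gauss_moment 0 = sqrt pi"
  by (simp add: gauss_moment_def)

lemma gauss_moment_Suc: "gauss_moment (Suc k) = real k / 2 * gauss_moment (k - 1)"
proof (cases "odd k")
  case True
  then obtain m where k: "k = Suc (2 * m)" using oddE by fastforce
  define F P G :: real where "F = fact (2 * m)" and "P = 2 ^ (2 * m)" and "G = fact m"
  have "P \<noteq> 0" "G \<noteq> 0"
    by (simp_all add: P_def G_def)
  have "sqrt pi * ((2 * real m + 2) * ((2 * real m + 1) * F)) / (4 * P * ((real m + 1) * G))
      = ((real m + 1) * (2 * sqrt pi * (2 * real m + 1) * F)) / ((real m + 1) * (4 * P * G))"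
    by (simp add: algebra_simps)
  also have "\<dots> = (2 * sqrt pi * (2 * real m + 1) * F) / (4 * P * G)"
    by (rule mult_divide_mult_cancel_left) simp
  also have "\<dots> = (2 * real m + 1) / 2 * (sqrt pi * F / (P * G))"
    using \<open>P \<noteq> 0\<close> \<open>G \<noteq> 0\<close> by (simp add: field_simps)
  finally show ?thesis
    by (simp add: k gauss_moment_def F_def P_def G_def algebra_simps)
qed (auto simp: gauss_moment_def)

lemma has_bochner_integral_gauss_moment2:
  "has_bochner_integral (lborel :: (real \<times> real) measure)
     (\<lambda>(x, y). x ^ a * y ^ b * exp (- (x\<^sup>2 + y\<^sup>2))) (gauss_moment a * gauss_moment b)"
proof -
  define f where "f k x = exp (- x\<^sup>2) * x ^ k" for k and x :: real
  have int: "integrable lborel (f k)" and val: "integral\<^sup>L lborel (f k) = gauss_moment k" for k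
    using has_bochner_integral_gauss_moment[of k] unfolding f_def
    by (auto simp: has_bochner_integral_iff)
  have meas: "(\<lambda>z. f a (fst z) * f b (snd z)) \<in> borel_measurable (lborel \<Otimes>\<^sub>M lborel)"
    unfolding f_def by measurable
  have int2: "integrable (lborel \<Otimes>\<^sub>M lborel) (\<lambda>z. f a (fst z) * f b (snd z))"
  proof (rule lborel_pair.Fubini_integrable[OF meas])
    show "integrable lborel (\<lambda>x. \<integral>y. norm (f a (fst (x, y)) * f b (snd (x, y))) \<partial>lborel)"
      using int[of a] by (simp add: norm_mult abs_mult integrable_mult_left integrable_norm)
    show "AE x in lborel. integrable lborel (\<lambda>y. f a (fst (x, y)) * f b (snd (x, y)))"
      using int[of b] by (simp add: integrable_mult_right)
  qed
  have "integral\<^sup>L (lborel \<Otimes>\<^sub>M lborel) (\<lambda>z. f a (fst z) * f b (snd z)) = gauss_moment a * gauss_moment b"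
    using lborel_pair.integral_fst'[OF int2] by (simp add: val)
  moreover have "(\<lambda>(x, y). x ^ a * y ^ b * exp (- (x\<^sup>2 + y\<^sup>2))) = (\<lambda>z. f a (fst z) * f b (snd z))"
    by (auto simp: f_def fun_eq_iff ac_simps exp_add[symmetric])
  ultimately show ?thesis
    using int2 by (simp add: has_bochner_integral_iff lborel_prod)
qed

definition gauss_integrand :: "bpoly \<Rightarrow> real \<times> real \<Rightarrow> complex" where
  "gauss_integrand P = (\<lambda>(x, y). beval P x y * complex_of_real (exp (- (x\<^sup>2 + y\<^sup>2))))"

definition gauss_integral :: "bpoly \<Rightarrow> complex" where
  "gauss_integral P = integral\<^sup>L lborel (gauss_integrand P)"

lemma has_bochner_integral_gauss_integrand_monom:
  "has_bochner_integral lborel (gauss_integrand (bconst c * bX ^ i * bY ^ j))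
     (c * complex_of_real (gauss_moment i * gauss_moment j))"
proof -
  have "gauss_integrand (bconst c * bX ^ i * bY ^ j) =
      (\<lambda>z. c * complex_of_real ((\<lambda>(x, y). x ^ i * y ^ j * exp (- (x\<^sup>2 + y\<^sup>2))) z))"
    by (auto simp: gauss_integrand_def beval_mult beval_power fun_eq_iff)
  then show ?thesis
    using has_bochner_integral_mult_right[OF
        has_bochner_integral_of_real[OF has_bochner_integral_gauss_moment2]]
    by simp
qed

lemma bpoly_expand:
  "P = (\<Sum>i\<le>degree P. \<Sum>j\<le>degree (coeff P i). bconst (coeff (coeff P i) j) * bX ^ i * bY ^ j)"
proof -
  have "P = (\<Sum>i\<le>degree P. monom (\<Sum>j\<le>degree (coeff P i). monom (coeff (coeff P i) j) j) i)"
    by (simp add: poly_as_sum_of_monoms)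
  then show ?thesis
    by (simp add: monom_sum bconst_mult_bX_bY_power)
qed

lemma gauss_integrand_add: "gauss_integrand (P + Q) = (\<lambda>z. gauss_integrand P z + gauss_integrand Q z)"
  and gauss_integrand_bconst_mult: "gauss_integrand (bconst c * P) = (\<lambda>z. c * gauss_integrand P z)"
  and gauss_integrand_sum: "gauss_integrand (\<Sum>i\<in>A. f i) = (\<lambda>z. \<Sum>i\<in>A. gauss_integrand (f i) z)"
  by (auto simp: gauss_integrand_def beval_add beval_mult beval_sum fun_eq_iff algebra_simps
      sum_distrib_right)

lemma integrable_gauss_integrand: "integrable lborel (gauss_integrand P)"
proof -
  have "gauss_integrand P = (\<lambda>z. \<Sum>i\<le>degree P. \<Sum>j\<le>degree (coeff P i).
      gauss_integrand (bconst (coeff (coeff P i) j) * bX ^ i * bY ^ j) z)"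
    by (subst bpoly_expand) (simp add: gauss_integrand_sum)
  then show ?thesis
    using has_bochner_integral_gauss_integrand_monom
    by (simp add: has_bochner_integral_iff)
qed

lemma gauss_integral_add: "gauss_integral (P + Q) = gauss_integral P + gauss_integral Q"
  unfolding gauss_integral_def gauss_integrand_add
  by (rule Bochner_Integration.integral_add) (rule integrable_gauss_integrand)+

lemma gauss_integral_bconst_mult: "gauss_integral (bconst c * P) = c * gauss_integral P"
  unfolding gauss_integral_def gauss_integrand_bconst_mult by simp

lemma gauss_integral_sum: "gauss_integral (\<Sum>i\<in>A. f i) = (\<Sum>i\<in>A. gauss_integral (f i))"
  unfolding gauss_integral_def gauss_integrand_sum
  by (rule Bochner_Integration.integral_sum) (rule integrable_gauss_integrand)

lemma gauss_integral_monom: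
  "gauss_integral (bconst c * bX ^ i * bY ^ j) = c * complex_of_real (gauss_moment i * gauss_moment j)"
  unfolding gauss_integral_def using has_bochner_integral_gauss_integrand_monom
  by (simp add: has_bochner_integral_iff)

lemma pderiv_monom_bX_bY:
  "pderiv (bconst c * bX ^ i * bY ^ j) = bconst (c * of_nat i) * bX ^ (i - 1) * bY ^ j"
proof -
  have "pderiv (bX ^ i) = of_nat i * bX ^ (i - 1)"
    by (induction i) (auto simp: pderiv_mult algebra_simps power_eq_if)
  moreover have "pderiv (bY ^ j) = 0"
    by (induction j) (auto simp: pderiv_mult)
  ultimately show ?thesis
    by (simp add: pderiv_mult bconst_mult bconst_of_nat algebra_simps)
qed

lemma pderiv_y_1 [simp]: "pderiv_y 1 = 0"
  using pderiv_y_bconst[of 1] by simp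

lemma pderiv_y_monom_bX_bY:
  "pderiv_y (bconst c * bX ^ i * bY ^ j) = bconst (c * of_nat j) * bX ^ i * bY ^ (j - 1)"
proof -
  have "pderiv_y (bY ^ j) = of_nat j * bY ^ (j - 1)"
    by (induction j) (auto simp: pderiv_y_mult algebra_simps power_eq_if)
  moreover have "pderiv_y (bX ^ i) = 0"
    by (induction i) (auto simp: pderiv_y_mult)
  ultimately show ?thesis
    by (simp add: pderiv_y_mult bconst_mult bconst_of_nat algebra_simps)
qed

text \<open>Integration by parts; on monomials it is the recursion of the Gaussian moments.\<close>

lemma gauss_integral_bX_mult: "gauss_integral (bX * P) = 1/2 * gauss_integral (pderiv P)"
proof -
  define m where "m i j = bconst (coeff (coeff P i) j) * bX ^ i * bY ^ j" for i j
  have P: "P = (\<Sum>i\<le>degree P. \<Sum>j\<le>degree (coeff P i). m i j)"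
    unfolding m_def by (rule bpoly_expand)
  have m: "gauss_integral (bX * m i j) = 1/2 * gauss_integral (pderiv (m i j))" for i j
  proof -
    have "bX * m i j = bconst (coeff (coeff P i) j) * bX ^ Suc i * bY ^ j"
      by (simp add: m_def algebra_simps)
    then have "gauss_integral (bX * m i j)
        = coeff (coeff P i) j * complex_of_real (gauss_moment (Suc i) * gauss_moment j)"
      by (simp only: gauss_integral_monom)
    then show ?thesis
      by (simp add: m_def pderiv_monom_bX_bY gauss_integral_monom gauss_moment_Suc)
  qed
  have pderiv_sum: "pderiv (\<Sum>i\<in>A. f i) = (\<Sum>i\<in>A. pderiv (f i))" for A and f :: "nat \<Rightarrow> bpoly"
    by (induction A rule: infinite_finite_induct) (auto simp: pderiv_add)
  show ?thesis
    by (subst (1 2) P) (simp add: sum_distrib_left gauss_integral_sum pderiv_sum m)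
qed

lemma gauss_integral_bY_mult: "gauss_integral (bY * P) = 1/2 * gauss_integral (pderiv_y P)"
proof -
  define m where "m i j = bconst (coeff (coeff P i) j) * bX ^ i * bY ^ j" for i j
  have P: "P = (\<Sum>i\<le>degree P. \<Sum>j\<le>degree (coeff P i). m i j)"
    unfolding m_def by (rule bpoly_expand)
  have m: "gauss_integral (bY * m i j) = 1/2 * gauss_integral (pderiv_y (m i j))" for i j
  proof -
    have "bY * m i j = bconst (coeff (coeff P i) j) * bX ^ i * bY ^ Suc j"
      by (simp add: m_def algebra_simps)
    then have "gauss_integral (bY * m i j)
        = coeff (coeff P i) j * complex_of_real (gauss_moment i * gauss_moment (Suc j))"
      by (simp only: gauss_integral_monom)
    then show ?thesis
      by (simp add: m_def pderiv_y_monom_bX_bY gauss_integral_monom gauss_moment_Suc)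
  qed
  show ?thesis
    by (subst (1 2) P) (simp add: sum_distrib_left gauss_integral_sum pderiv_y_sum m)
qed

lemma gauss_integral_bZ_mult: "gauss_integral (bZ * P) = gauss_integral (dzbar P)"
  and gauss_integral_bZbar_mult: "gauss_integral (bZbar * P) = gauss_integral (dz P)"
proof -
  have "bZ * P = bX * P + bconst \<i> * (bY * P)" "bZbar * P = bX * P + bconst (- \<i>) * (bY * P)"
    "dzbar P = bconst (1/2) * pderiv P + bconst (\<i> / 2) * pderiv_y P"
    "dz P = bconst (1/2) * pderiv P + bconst (- \<i> / 2) * pderiv_y P"
    by (simp_all add: bZ_def bZbar_def dz_def dzbar_def algebra_simps bconst_minus
        flip: bconst_mult)
  then show "gauss_integral (bZ * P) = gauss_integral (dzbar P)"
    and "gauss_integral (bZbar * P) = gauss_integral (dz P)"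
    by (simp_all add: gauss_integral_add gauss_integral_bconst_mult gauss_integral_bX_mult
        gauss_integral_bY_mult)
qed

lemma gauss_integral_0 [simp]: "gauss_integral 0 = 0"
  using gauss_integral_bconst_mult[of 0 0] by simp

lemma gauss_integral_bZ_bZbar_power:
  "gauss_integral (bZ ^ a * bZbar ^ b) = (if a = b then complex_of_real (fact a * pi) else 0)"
proof (induction a arbitrary: b)
  case 0
  show ?case
  proof (cases b)
    case 0
    then show ?thesis
      using gauss_integral_monom[of 1 0 0] by (simp add: gauss_moment_0)
  next
    case (Suc b')
    then show ?thesis
      using gauss_integral_bZbar_mult[of "bZbar ^ b'"] by (simp add: dz_power)
  qed
next
  case (Suc a)
  have "gauss_integral (bZ ^ Suc a * bZbar ^ b)
      = gauss_integral (bconst (of_nat b) * (bZ ^ a * bZbar ^ (b - 1)))"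
    by (simp add: mult.assoc gauss_integral_bZ_mult dzbar_bZ_bZbar_power bconst_of_nat)
  also have "\<dots> = (if Suc a = b then complex_of_real (fact (Suc a) * pi) else 0)"
    by (cases b) (simp_all add: gauss_integral_bconst_mult Suc.IH)
  finally show ?case .
qed

lemma fischer_norm_eq_gauss_integral:
  assumes "\<And>x y. beval Q x y = cnj (beval P x y)"
  shows "fischer_norm P = sqrt (Re (gauss_integral (P * Q)))"
proof -
  have "gauss_integrand (P * Q) (x, y)
      = complex_of_real ((cmod (beval P x y))\<^sup>2 * exp (- (x\<^sup>2 + y\<^sup>2)))" for x y
    by (simp only: gauss_integrand_def case_prod_conv beval_mult assms of_real_mult
        complex_norm_square)
  then have "gauss_integrand (P * Q) =
      (\<lambda>z. complex_of_real ((\<lambda>(x, y). (cmod (beval P x y))\<^sup>2 * exp (- (x\<^sup>2 + y\<^sup>2))) z))"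
    by (simp add: fun_eq_iff split_def)
  then show ?thesis
    by (simp add: fischer_norm_def gauss_integral_def)
qed

lemma gauss_integral_zmonom_mult_conj:
  assumes "j \<le> N" "k \<le> N"
  shows "gauss_integral (zmonom N j * (bZbar ^ k * bZ ^ (N - k))) =
    (if j = k then complex_of_real (fact N * pi) else 0)"
proof -
  have "zmonom N j * (bZbar ^ k * bZ ^ (N - k)) = bZ ^ (j + (N - k)) * bZbar ^ ((N - j) + k)"
    by (simp add: zmonom_def power_add ac_simps)
  moreover have "j + (N - k) = (N - j) + k \<longleftrightarrow> j = k"
    using assms by auto
  ultimately show ?thesis
    using assms by (simp add: gauss_integral_bZ_bZbar_power)
qed

lemma fischer_norm_zcomb: "fischer_norm (zcomb N c) = sqrt (pi * fact N * (\<Sum>j\<le>N. (cmod (c j))\<^sup>2))"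
proof -
  define Q where "Q = (\<Sum>k\<le>N. bconst (cnj (c k)) * (bZbar ^ k * bZ ^ (N - k)))"
  have conj: "beval Q x y = cnj (beval (zcomb N c) x y)" for x y
  proof -
    have "cnj (complex_of_real x + \<i> * complex_of_real y) = complex_of_real x - \<i> * complex_of_real y"
      and "cnj (complex_of_real x - \<i> * complex_of_real y) = complex_of_real x + \<i> * complex_of_real y"
      by (simp_all add: complex_eq_iff)
    then show ?thesis
      by (simp add: Q_def zcomb_def beval_sum beval_mult beval_power beval_zmonom)
  qed
  have bconst_mult_mult: "bconst a * X * (bconst b * Y) = bconst (a * b) * (X * Y)" for a b X Y
    by (simp add: bconst_mult ac_simps)
  have "zcomb N c * Q =
      (\<Sum>j\<le>N. \<Sum>k\<le>N. bconst (c j * cnj (c k)) * (zmonom N j * (bZbar ^ k * bZ ^ (N - k))))"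
    unfolding zcomb_def Q_def sum_product bconst_mult_mult ..
  then have "gauss_integral (zcomb N c * Q) =
      (\<Sum>j\<le>N. \<Sum>k\<le>N. c j * cnj (c k) * gauss_integral (zmonom N j * (bZbar ^ k * bZ ^ (N - k))))"
    by (simp add: gauss_integral_sum gauss_integral_bconst_mult)
  also have "\<dots> = (\<Sum>j\<le>N. \<Sum>k\<le>N. if k = j then c j * cnj (c j) * complex_of_real (fact N * pi) else 0)"
    by (intro sum.cong refl) (auto simp: gauss_integral_zmonom_mult_conj)
  also have "\<dots> = (\<Sum>j\<le>N. c j * cnj (c j) * complex_of_real (fact N * pi))"
    by (simp add: sum.delta)
  also have "\<dots> = (\<Sum>j\<le>N. complex_of_real ((cmod (c j))\<^sup>2 * (fact N * pi)))"
    by (simp only: complex_norm_square of_real_mult)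
  finally have "Re (gauss_integral (zcomb N c * Q)) = pi * fact N * (\<Sum>j\<le>N. (cmod (c j))\<^sup>2)"
    by (simp add: sum_distrib_left mult_ac flip: of_real_sum)
  then show ?thesis
    using fischer_norm_eq_gauss_integral[OF conj] by simp
qed

section \<open>The Fischer operator in coordinates\<close>

definition fischer_op :: "nat \<Rightarrow> (nat \<Rightarrow> real) \<Rightarrow> bpoly \<Rightarrow> bpoly" where
  "fischer_op p a q = (laplace ^^ p) (Pa p a * q)"

text \<open>Row r of M_{m,p,a} consists of powers of Anode a r (with A_0 = 1 for the row of ones), and
  column k carries the exponent outer_index m p k. These exponents are the indices 0..p-1 and
  m+p+1..m+2p of the coordinates of P_a q that Delta^p annihilates; the middle indices p..m+p are
  the ones it scales by lap_factor.\<close>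

definition Anode :: "(nat \<Rightarrow> real) \<Rightarrow> nat \<Rightarrow> complex" where
  "Anode a r = (if r = 0 then 1 else Amap (a r))"

definition outer_index :: "nat \<Rightarrow> nat \<Rightarrow> nat \<Rightarrow> nat" where
  "outer_index m p k = (if k < p then k else m + 1 + k)"

lemma Mmat_eq: "Mmat m p a = mat (2 * p) (2 * p) (\<lambda>(r, k). Anode a r ^ outer_index m p k)"
  unfolding Mmat_def Anode_def outer_index_def by (rule cong_mat) auto

lemma Mmat_carrier: "Mmat m p a \<in> carrier_mat (2 * p) (2 * p)"
  by (simp add: Mmat_eq)

lemma index_cases_outer_or_middle:
  "j \<le> m + 2 * p \<Longrightarrow> j \<in> {p..m + p} \<or> (\<exists>k<2 * p. j = outer_index m p k)"
  by (cases "j < p"; cases "j \<le> m + p")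
    (auto simp: outer_index_def intro: exI[of _ j] exI[of _ "j - m - 1"])

lemma sum_atMost_split_outer_middle:
  fixes g :: "nat \<Rightarrow> 'b::comm_monoid_add"
  shows "(\<Sum>j\<le>m + 2 * p. g j) = (\<Sum>k<2 * p. g (outer_index m p k)) + (\<Sum>j\<in>{p..m + p}. g j)"
proof -
  have outer: "(\<Sum>k<2 * p. g (outer_index m p k))
      = (\<Sum>j\<in>{0..<p}. g j) + (\<Sum>j\<in>{m + p + 1..<m + 2 * p + 1}. g j)"
  proof -
    have "(\<Sum>k<2 * p. g (outer_index m p k))
        = (\<Sum>k\<in>{0..<p}. g (outer_index m p k)) + (\<Sum>k\<in>{p..<2 * p}. g (outer_index m p k))"
      by (simp add: lessThan_atLeast0 sum.atLeastLessThan_concat)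
    also have "(\<Sum>k\<in>{0..<p}. g (outer_index m p k)) = (\<Sum>j\<in>{0..<p}. g j)"
      by (rule sum.cong) (auto simp: outer_index_def)
    also have "(\<Sum>k\<in>{p..<2 * p}. g (outer_index m p k)) = (\<Sum>k\<in>{p..<2 * p}. g (k + (m + 1)))"
      by (rule sum.cong) (auto simp: outer_index_def ac_simps)
    also have "\<dots> = (\<Sum>j\<in>{p + (m + 1)..<2 * p + (m + 1)}. g j)"
      by (rule sum.shift_bounds_nat_ivl[symmetric])
    also have "{p + (m + 1)..<2 * p + (m + 1)} = {m + p + 1..<m + 2 * p + 1}"
      by auto
    finally show ?thesis .
  qed
  have "(\<Sum>j\<le>m + 2 * p. g j) = (\<Sum>j\<in>{0..<m + 2 * p + 1}. g j)"
    by (rule sum.cong) auto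
  also have "\<dots> = (\<Sum>j\<in>{0..<m + p + 1}. g j) + (\<Sum>j\<in>{m + p + 1..<m + 2 * p + 1}. g j)"
    by (rule sum.atLeastLessThan_concat[symmetric]) auto
  also have "(\<Sum>j\<in>{0..<m + p + 1}. g j) = (\<Sum>j\<in>{0..<p}. g j) + (\<Sum>j\<in>{p..<m + p + 1}. g j)"
    by (rule sum.atLeastLessThan_concat[symmetric]) auto
  also have "{p..<m + p + 1} = {p..m + p}"
    by auto
  finally show ?thesis
    unfolding outer by (simp add: ac_simps)
qed

lemma Pa_in_homog_polys:
  assumes "p \<ge> 1"
  shows "Pa p a \<in> homog_polys (2 * p)"
proof -
  have "(\<Prod>j\<in>{1..2*p-1}. bX - bconst (complex_of_real (a j)) * bY) \<in> homog_polys (card {1..2*p-1})"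
    by (intro homog_polys_prod homog_polys_diff homog_polys_bX homog_polys_bconst_mult
        homog_polys_bY) simp
  then have "Pa p a \<in> homog_polys (1 + card {1..2*p-1})"
    unfolding Pa_def by (rule homog_polys_mult[OF homog_polys_bY])
  then show ?thesis
    using assms by simp
qed

lemma Pa_neq_0: "Pa p a \<noteq> 0"
proof -
  have "bX - bconst c * bY \<noteq> 0" for c
  proof
    assume "bX - bconst c * bY = 0"
    then have "coeff (bX - bconst c * bY) 1 = 0" by simp
    then show False by (simp add: bX_def bY_def bconst_def)
  qed
  moreover have "bY \<noteq> 0" by (simp add: bY_def)
  ultimately show ?thesis
    unfolding Pa_def by (simp add: prod_zero_iff)
qed

lemma beval_Pa_1_0: "p \<ge> 1 \<Longrightarrow> beval (Pa p a) 1 0 = 0"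
  by (simp add: Pa_def beval_mult)

lemma beval_Pa_node_1:
  assumes "r \<in> {1..2*p-1}"
  shows "beval (Pa p a) (a r) 1 = 0"
proof -
  have "(\<Prod>j\<in>{1..2*p-1}. complex_of_real (a r) - complex_of_real (a j)) = 0"
    using assms by (intro prod_zero) auto
  then show ?thesis
    by (simp add: Pa_def beval_mult beval_diff beval_prod)
qed

text \<open>Divisibility of P_a q by y and by each x - a_r y, read off in its coordinates.\<close>

lemma zcoord_Pa_mult_equations:
  assumes "p \<ge> 1" "q \<in> homog_polys m" "r < 2 * p"
  shows "(\<Sum>j\<le>m + 2 * p. zcoord (m + 2 * p) (Pa p a * q) j * Anode a r ^ j) = 0"
proof -
  define c where "c = zcoord (m + 2 * p) (Pa p a * q)"
  have "Pa p a * q \<in> homog_polys (m + 2 * p)"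
    using homog_polys_mult[OF Pa_in_homog_polys[OF assms(1)] assms(2)] by (simp add: add.commute)
  then have Pq: "zcomb (m + 2 * p) c = Pa p a * q"
    unfolding c_def by (rule zcomb_zcoord)
  show ?thesis
  proof (cases "r = 0")
    case True
    have "(\<Sum>j\<le>m + 2 * p. c j) = 0"
      using beval_zcomb_1_0[of "m + 2 * p" c] beval_Pa_1_0[OF assms(1), of a]
      by (simp add: Pq beval_mult)
    then show ?thesis
      using True by (simp add: Anode_def c_def)
  next
    case False
    then have "r \<in> {1..2*p-1}" using assms(3) by auto
    have "(complex_of_real (a r) - \<i>) ^ (m + 2 * p) * (\<Sum>j\<le>m + 2 * p. c j * Amap (a r) ^ j)
        = beval (Pa p a * q) (a r) 1"
      by (simp add: beval_zcomb_x_1 flip: Pq)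
    also have "\<dots> = 0"
      using beval_Pa_node_1[OF \<open>r \<in> {1..2*p-1}\<close>] by (simp add: beval_mult)
    finally show ?thesis
      using False of_real_minus_i_neq_0[of "a r"] by (simp add: Anode_def c_def)
  qed
qed
lemma zcomb_zcoord_Pa_mult:
  assumes "p \<ge> 1" "q \<in> homog_polys m"
  shows "zcomb (m + 2 * p) (zcoord (m + 2 * p) (Pa p a * q)) = Pa p a * q"
  using homog_polys_mult[OF Pa_in_homog_polys[OF assms(1)] assms(2)]
  by (simp add: zcomb_zcoord add.commute)

lemma fischer_op_eq_zcomb:
  fixes a :: "nat \<Rightarrow> real"
  assumes "p \<ge> 1" "q \<in> homog_polys m"
  defines "c \<equiv> zcoord (m + 2 * p) (Pa p a * q)"
  shows "fischer_op p a q = zcomb m (\<lambda>i. c (i + p) * of_nat (lap_factor p (m + 2 * p) (i + p)))"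
proof -
  define g where "g j = bconst (c j * of_nat (lap_factor p (m + 2 * p) j)) * zmonom m (j - p)" for j
  have "fischer_op p a q = (laplace ^^ p) (zcomb (m + 2 * p) c)"
    using zcomb_zcoord_Pa_mult[where a=a, OF assms(1,2)] by (simp add: fischer_op_def c_def)
  also have "\<dots> = (\<Sum>j\<le>m + 2 * p. g j)"
    by (simp add: zcomb_def g_def laplace_pow_sum laplace_pow_bconst_mult laplace_pow_zmonom
        bconst_mult mult.assoc)
  also have "\<dots> = (\<Sum>j\<in>{p..m + p}. g j)"
  proof (rule sum.mono_neutral_right)
    show "\<forall>j\<in>{..m + 2 * p} - {p..m + p}. g j = 0"
    proof
      fix j
      assume "j \<in> {..m + 2 * p} - {p..m + p}"
      then have "lap_factor p (m + 2 * p) j = 0"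
        by (auto simp: lap_factor_eq_0_iff)
      then show "g j = 0"
        by (simp add: g_def)
    qed
  qed auto
  also have "\<dots> = (\<Sum>i\<le>m. g (i + p))"
    using sum.shift_bounds_cl_nat_ivl[of g 0 p m] by (simp add: atLeast0AtMost)
  finally show ?thesis
    by (simp add: zcomb_def g_def)
qed

lemma fischer_op_in_homog_polys: "p \<ge> 1 \<Longrightarrow> q \<in> homog_polys m \<Longrightarrow> fischer_op p a q \<in> homog_polys m"
  by (simp add: fischer_op_eq_zcomb zcomb_in_homog_polys)

lemma zcoord_fischer_op:
  assumes "p \<ge> 1" "q \<in> homog_polys m" "i \<le> m"
  shows "zcoord m (fischer_op p a q) i =
    zcoord (m + 2 * p) (Pa p a * q) (i + p) * of_nat (lap_factor p (m + 2 * p) (i + p))"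
  using assms by (simp add: fischer_op_eq_zcomb zcoord_zcomb)

lemma fischer_op_add: "fischer_op p a (q1 + q2) = fischer_op p a q1 + fischer_op p a q2"
  and fischer_op_diff: "fischer_op p a (q1 - q2) = fischer_op p a q1 - fischer_op p a q2"
  and fischer_op_bconst_mult: "fischer_op p a (bconst c * q) = bconst c * fischer_op p a q"
    apply (simp add: fischer_op_def distrib_left laplace_pow_add)
   apply (simp add: fischer_op_def right_diff_distrib laplace_pow_diff)
  apply (simp only: fischer_op_def mult.left_commute[of "Pa p a"] laplace_pow_bconst_mult)
  done

lemma Mmat_mult_outer_zcoords:
  fixes a :: "nat \<Rightarrow> real"
  assumes "p \<ge> 1" "q \<in> homog_polys m" "r < 2 * p"
  defines "c \<equiv> zcoord (m + 2 * p) (Pa p a * q)"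
  shows "(Mmat m p a *\<^sub>v vec (2 * p) (\<lambda>k. c (outer_index m p k))) $ r
    = - (\<Sum>j\<in>{p..m + p}. c j * Anode a r ^ j)"
proof -
  have "(Mmat m p a *\<^sub>v vec (2 * p) (\<lambda>k. c (outer_index m p k))) $ r
      = (\<Sum>k<2 * p. c (outer_index m p k) * Anode a r ^ outer_index m p k)"
    using assms(3) by (simp add: Mmat_eq scalar_prod_def lessThan_atLeast0 ac_simps)
  then show ?thesis
    using zcoord_Pa_mult_equations[OF assms(1-3), of a]
    unfolding sum_atMost_split_outer_middle c_def by (simp add: eq_neg_iff_add_eq_0)
qed

lemma middle_zcoord_eq_0:
  assumes "p \<ge> 1" "q \<in> homog_polys m" "j \<in> {p..m + p}" "zcoord m (fischer_op p a q) (j - p) = 0"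
  shows "zcoord (m + 2 * p) (Pa p a * q) j = 0"
proof -
  have "lap_factor p (m + 2 * p) j \<noteq> 0"
    using assms(3) by (auto simp: lap_factor_eq_0_iff)
  then show ?thesis
    using zcoord_fischer_op[OF assms(1,2), of "j - p" a] assms(3,4) by auto
qed

lemma fischer_op_eq_0_imp:
  assumes "p \<ge> 1" "q \<in> homog_polys m" "Determinant.det (Mmat m p a) \<noteq> 0" "fischer_op p a q = 0"
  shows "q = 0"
proof -
  define c where "c = zcoord (m + 2 * p) (Pa p a * q)"
  have middle: "c j = 0" if "j \<in> {p..m + p}" for j
  proof -
    have "j - p \<le> m"
      using that by auto
    then have "zcoord m (fischer_op p a q) (j - p) = 0"
      using assms(4) zcoord_0 by simp
    then show ?thesis
      using middle_zcoord_eq_0[where a=a, OF assms(1,2) that] by (simp add: c_def)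
  qed
  define v where "v = vec (2 * p) (\<lambda>k. c (outer_index m p k))"
  have "Mmat m p a *\<^sub>v v = 0\<^sub>v (2 * p)"
    using Mmat_mult_outer_zcoords[OF assms(1,2)] middle
    by (intro eq_vecI) (auto simp: v_def c_def Mmat_eq)
  moreover have "v \<in> carrier_vec (2 * p)"
    by (simp add: v_def)
  ultimately have "v = 0\<^sub>v (2 * p)"
    using assms(3) det_0_iff_vec_prod_zero[OF Mmat_carrier[of m p a]] by blast
  then have outer: "c (outer_index m p k) = 0" if "k < 2 * p" for k
  proof -
    have "v $ k = 0"
      using that by (simp add: \<open>v = 0\<^sub>v (2 * p)\<close>)
    then show ?thesis
      using that by (simp add: v_def)
  qed
  have "Pa p a * q = zcomb (m + 2 * p) c"
    using zcomb_zcoord_Pa_mult[where a=a, OF assms(1,2)] by (simp add: c_def)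
  also have "\<dots> = 0"
  proof -
    have "c j = 0" if "j \<le> m + 2 * p" for j
      using index_cases_outer_or_middle[OF that] middle outer by blast
    then show ?thesis
      by (simp add: zcomb_def)
  qed
  finally show "q = 0"
    using Pa_neq_0 by simp
qed
section \<open>Bijectivity of the Fischer operator\<close>

lemma exists_mult_mat_vec_eq_if_det_neq_0:
  fixes A :: "'a::field mat"
  assumes A: "A \<in> carrier_mat n n" and det: "Determinant.det A \<noteq> 0" and b: "b \<in> carrier_vec n"
  shows "\<exists>v\<in>carrier_vec n. A *\<^sub>v v = b"
proof
  define v where "v = (1 / Determinant.det A) \<cdot>\<^sub>v (adj_mat A *\<^sub>v b)"
  show "v \<in> carrier_vec n"
    using adj_mat(1)[OF A] b by (simp add: v_def)
  have "A *\<^sub>v v = (1 / Determinant.det A) \<cdot>\<^sub>v ((A * adj_mat A) *\<^sub>v b)"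
    using A adj_mat(1)[OF A] b by (simp add: v_def mult_mat_vec assoc_mult_mat_vec)
  also have "(A * adj_mat A) *\<^sub>v b = Determinant.det A \<cdot>\<^sub>v b"
  proof (rule eq_vecI)
    fix i
    assume "i < dim_vec (Determinant.det A \<cdot>\<^sub>v b)"
    then have i: "i < n" using b by simp
    have "(\<Sum>j = 0..<n. Determinant.det A * (if i = j then 1 else 0) * b $ j)
        = (\<Sum>j\<in>{i}. Determinant.det A * b $ j)"
      using i by (intro sum.mono_neutral_cong_right) auto
    then show "((A * adj_mat A) *\<^sub>v b) $ i = (Determinant.det A \<cdot>\<^sub>v b) $ i"
      using i b by (simp add: adj_mat(2)[OF A] scalar_prod_def one_mat_def)
  qed (use b A in \<open>simp add: adj_mat(2)[OF A]\<close>)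
  finally show "A *\<^sub>v v = b"
    using det b by (intro eq_vecI) auto
qed

definition coord_mat :: "nat \<Rightarrow> (bpoly \<Rightarrow> bpoly) \<Rightarrow> complex mat" where
  "coord_mat m F = mat (m + 1) (m + 1) (\<lambda>(i, j). zcoord m (F (zmonom m j)) i)"

lemma coord_mat_carrier: "coord_mat m F \<in> carrier_mat (m + 1) (m + 1)"
  by (simp add: coord_mat_def)

lemma linear_map_zcomb_eq_zcomb_coord_mat_mult:
  assumes maps: "F ` homog_polys m \<subseteq> homog_polys m"
    and add: "\<And>q1 q2. F (q1 + q2) = F q1 + F q2"
    and scale: "\<And>c q. F (bconst c * q) = bconst c * F q"
    and v: "v \<in> carrier_vec (m + 1)"
  shows "F (zcomb m (\<lambda>j. v $ j)) = zcomb m (\<lambda>i. (coord_mat m F *\<^sub>v v) $ i)"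
proof -
  define T where "T = coord_mat m F"
  have F_sum: "F (\<Sum>j\<in>A. g j) = (\<Sum>j\<in>A. F (g j))" for A g
    using scale[of 0 0] by (induction A rule: infinite_finite_induct) (simp_all add: add)
  have F_zmonom: "F (zmonom m j) = zcomb m (\<lambda>i. T $$ (i, j))" if "j \<le> m" for j
  proof -
    have "zcomb m (\<lambda>i. T $$ (i, j)) = zcomb m (zcoord m (F (zmonom m j)))"
      using that by (intro zcomb_cong) (simp add: T_def coord_mat_def)
    also have "\<dots> = F (zmonom m j)"
      using maps homog_polys_zmonom[OF that] by (blast intro: zcomb_zcoord)
    finally show ?thesis ..
  qed
  have "F (zcomb m (\<lambda>j. v $ j)) = (\<Sum>j\<le>m. bconst (v $ j) * zcomb m (\<lambda>i. T $$ (i, j)))"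
    unfolding zcomb_def[of m "\<lambda>j. v $ j"] F_sum scale
    by (intro sum.cong refl) (simp add: F_zmonom)
  also have "\<dots> = (\<Sum>j\<le>m. \<Sum>i\<le>m. bconst (T $$ (i, j) * v $ j) * zmonom m i)"
    unfolding zcomb_def sum_distrib_left by (intro sum.cong refl) (simp only: bconst_mult ac_simps)
  also have "\<dots> = (\<Sum>i\<le>m. bconst (\<Sum>j\<le>m. T $$ (i, j) * v $ j) * zmonom m i)"
    by (subst sum.swap) (simp add: bconst_sum sum_distrib_right)
  also have "\<dots> = zcomb m (\<lambda>i. (T *\<^sub>v v) $ i)"
    unfolding zcomb_def using coord_mat_carrier[of m F] v
    by (intro sum.cong refl) (simp add: T_def scalar_prod_def atLeast0LessThan lessThan_Suc_atMost)
  finally show ?thesis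
    by (simp add: T_def)
qed

lemma surj_on_homog_polys_if_linear_inj:
  assumes maps: "F ` homog_polys m \<subseteq> homog_polys m"
    and add: "\<And>q1 q2. F (q1 + q2) = F q1 + F q2"
    and scale: "\<And>c q. F (bconst c * q) = bconst c * F q"
    and inj: "inj_on F (homog_polys m)"
    and f: "f \<in> homog_polys m"
  shows "\<exists>q\<in>homog_polys m. F q = f"
proof -
  note F_zcomb = linear_map_zcomb_eq_zcomb_coord_mat_mult[OF maps add scale]
  have "Determinant.det (coord_mat m F) \<noteq> 0"
  proof
    assume "Determinant.det (coord_mat m F) = 0"
    then obtain v where v: "v \<in> carrier_vec (m + 1)" "v \<noteq> 0\<^sub>v (m + 1)"
      "coord_mat m F *\<^sub>v v = 0\<^sub>v (m + 1)"
      using det_0_iff_vec_prod_zero[OF coord_mat_carrier] by blast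
    have "zcomb m (\<lambda>i. (coord_mat m F *\<^sub>v v) $ i) = zcomb m (\<lambda>_. 0)"
      by (rule zcomb_cong) (simp add: v(3))
    then have "F (zcomb m (\<lambda>j. v $ j)) = F 0"
      using F_zcomb[OF v(1)] scale[of 0 0] by (simp add: zcomb_0)
    then have "zcomb m (\<lambda>j. v $ j) = 0"
      using inj zcomb_in_homog_polys by (auto dest: inj_onD)
    then have "v = 0\<^sub>v (m + 1)"
      using v(1) zcomb_eq_0_imp by (intro eq_vecI) auto
    then show False
      using v(2) by simp
  qed
  then obtain v where v: "v \<in> carrier_vec (m + 1)" "coord_mat m F *\<^sub>v v = vec (m + 1) (zcoord m f)"
    using exists_mult_mat_vec_eq_if_det_neq_0[OF coord_mat_carrier _ vec_carrier] by blast
  have "F (zcomb m (\<lambda>j. v $ j)) = zcomb m (zcoord m f)"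
    unfolding F_zcomb[OF v(1)] by (rule zcomb_cong) (simp add: v(2))
  also have "\<dots> = f"
    by (rule zcomb_zcoord[OF f])
  finally show ?thesis
    using zcomb_in_homog_polys by blast
qed

lemma bij_betw_fischer_op:
  assumes "p \<ge> 1" "Determinant.det (Mmat m p a) \<noteq> 0"
  shows "bij_betw (fischer_op p a) (homog_polys m) (homog_polys m)"
proof -
  have inj: "inj_on (fischer_op p a) (homog_polys m)"
  proof (rule inj_onI)
    fix q1 q2
    assume "q1 \<in> homog_polys m" "q2 \<in> homog_polys m" "fischer_op p a q1 = fischer_op p a q2"
    then have "q1 - q2 = 0"
      using fischer_op_eq_0_imp[OF assms(1) homog_polys_diff assms(2)] by (simp add: fischer_op_diff)
    then show "q1 = q2" by simp
  qed
  have maps: "fischer_op p a ` homog_polys m \<subseteq> homog_polys m"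
    using fischer_op_in_homog_polys[OF assms(1)] by blast
  show ?thesis
    unfolding bij_betw_def
    using inj maps surj_on_homog_polys_if_linear_inj[OF maps fischer_op_add fischer_op_bconst_mult inj]
    by blast
qed

lemma vandermonde_left_null_eq_0:
  fixes A w :: "nat \<Rightarrow> 'a::idom"
  assumes inj: "inj_on A {..<n}" and "n \<le> Suc N"
    and null: "\<And>j. j \<le> N \<Longrightarrow> (\<Sum>r<n. w r * A r ^ j) = 0" and r0: "r0 < n"
  shows "w r0 = 0"
proof -
  define S where "S = {..<n} - {r0}"
  define g where "g = (\<Prod>r\<in>S. [:- A r, 1:])"
  have "degree g \<le> N"
    using degree_prod_sum_le[of S "\<lambda>r. [:- A r, 1:]"] r0 \<open>n \<le> Suc N\<close>
    by (simp add: g_def S_def o_def)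
  then have "poly g x = (\<Sum>j\<le>N. coeff g j * x ^ j)" for x
    by (auto simp: poly_altdef intro!: sum.mono_neutral_left intro: le_degree)
  then have "(\<Sum>r<n. w r * poly g (A r)) = (\<Sum>j\<le>N. coeff g j * (\<Sum>r<n. w r * A r ^ j))"
    by (simp add: sum_distrib_left ac_simps sum.swap[of _ "{..N}"])
  also have "\<dots> = 0"
    by (simp add: null)
  also have "(\<Sum>r<n. w r * poly g (A r)) = (\<Sum>r\<in>{r0}. w r * poly g (A r))"
    using r0 by (intro sum.mono_neutral_right) (auto simp: g_def S_def poly_prod)
  finally have "w r0 * poly g (A r0) = 0"
    by simp
  moreover have "poly g (A r0) \<noteq> 0"
    using inj r0 by (auto simp: g_def S_def poly_prod dest: inj_onD)
  ultimately show ?thesis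
    by simp
qed

lemma Amap_neq_1: "Amap x \<noteq> 1"
proof
  assume "Amap x = 1"
  then have "complex_of_real x + \<i> = complex_of_real x - \<i>"
    using of_real_minus_i_neq_0[of x] unfolding Amap_def by (simp add: divide_eq_1_iff)
  then show False
    by (simp add: complex_eq_iff)
qed

lemma inj_on_Anode:
  assumes "inj_on a {1..2 * p - 1}"
  shows "inj_on (Anode a) {..<2 * p}"
proof (rule inj_onI)
  fix r s
  assume "r \<in> {..<2 * p}" "s \<in> {..<2 * p}" "Anode a r = Anode a s"
  then show "r = s"
    using Amap_neq_1 inj_Amap assms
    by (auto simp: Anode_def split: if_splits dest: injD inj_onD)
qed

lemma transpose_Mmat_mult_vec:
  assumes "w \<in> carrier_vec (2 * p)" "k < 2 * p"
  shows "(transpose_mat (Mmat m p a) *\<^sub>v w) $ k = (\<Sum>r<2 * p. w $ r * Anode a r ^ outer_index m p k)"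
  using assms by (simp add: Mmat_eq scalar_prod_def lessThan_atLeast0 ac_simps)

lemma exists_middle_power_sum_neq_0:
  assumes "inj_on a {1..2 * p - 1}" "w \<in> carrier_vec (2 * p)" "w \<noteq> 0\<^sub>v (2 * p)"
    and "transpose_mat (Mmat m p a) *\<^sub>v w = 0\<^sub>v (2 * p)"
  shows "\<exists>j\<in>{p..m + p}. (\<Sum>r<2 * p. w $ r * Anode a r ^ j) \<noteq> 0"
proof (rule ccontr)
  assume "\<not> ?thesis"
  moreover have "(\<Sum>r<2 * p. w $ r * Anode a r ^ outer_index m p k) = 0" if "k < 2 * p" for k
    using transpose_Mmat_mult_vec[OF assms(2) that, of m a] assms(4) that by simp
  ultimately have "(\<Sum>r<2 * p. w $ r * Anode a r ^ j) = 0" if "j \<le> m + 2 * p" for j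
    using index_cases_outer_or_middle[OF that] by blast
  then have "w $ r = 0" if "r < 2 * p" for r
    using vandermonde_left_null_eq_0[OF inj_on_Anode[OF assms(1)], of "m + 2 * p" "\<lambda>r. w $ r" r] that
    by simp
  then show False
    using assms(2,3) by (metis carrier_vecD eq_vecI index_zero_vec)
qed

text \<open>A left null vector w of M_{m,p,a} eliminates the outer coordinates from the 2p equations and
  leaves one linear relation among the middle coordinates of P_a q: this is what keeps F_a from
  being onto when det M_{m,p,a} = 0.\<close>

lemma left_null_vector_middle_relation:
  fixes a :: "nat \<Rightarrow> real"
  assumes "p \<ge> 1" "q \<in> homog_polys m" "w \<in> carrier_vec (2 * p)"
    and "transpose_mat (Mmat m p a) *\<^sub>v w = 0\<^sub>v (2 * p)"
  defines "c \<equiv> zcoord (m + 2 * p) (Pa p a * q)"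
  shows "(\<Sum>j\<in>{p..m + p}. c j * (\<Sum>r<2 * p. w $ r * Anode a r ^ j)) = 0"
proof -
  define S where "S j = (\<Sum>r<2 * p. w $ r * Anode a r ^ j)" for j
  have S_outer: "S (outer_index m p k) = 0" if "k < 2 * p" for k
    using transpose_Mmat_mult_vec[OF assms(3) that, of m a] assms(4) that by (simp add: S_def)
  have "0 = (\<Sum>r<2 * p. w $ r * (\<Sum>j\<le>m + 2 * p. c j * Anode a r ^ j))"
    using zcoord_Pa_mult_equations[OF assms(1,2)] by (simp add: c_def)
  also have "\<dots> = (\<Sum>j\<le>m + 2 * p. c j * S j)"
    by (simp add: S_def sum_distrib_left ac_simps) (rule sum.swap)
  also have "\<dots> = (\<Sum>j\<in>{p..m + p}. c j * S j)"
    by (simp add: sum_atMost_split_outer_middle S_outer)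
  finally show ?thesis
    by (simp add: S_def)
qed

lemma middle_zcoord_of_preimage_zmonom:
  fixes a :: "nat \<Rightarrow> real"
  assumes "p \<ge> 1" "q \<in> homog_polys m" "j0 \<in> {p..m + p}" "fischer_op p a q = zmonom m (j0 - p)"
    and "j \<in> {p..m + p}"
  shows "zcoord (m + 2 * p) (Pa p a * q) j = 0 \<longleftrightarrow> j \<noteq> j0"
proof -
  have "j0 - p \<le> m" "j - p \<le> m" "j - p = j0 - p \<longleftrightarrow> j = j0"
    using assms(3,5) by auto
  then have "zcoord m (fischer_op p a q) (j - p) = (if j = j0 then 1 else 0)"
    using zcoord_zcomb[of "j - p" m "\<lambda>i. if i = j0 - p then 1 else 0"]
    by (simp add: assms(4) zcomb_indicator)
  moreover have "lap_factor p (m + 2 * p) j \<noteq> 0"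
    using assms(5) by (auto simp: lap_factor_eq_0_iff)
  ultimately show ?thesis
    using zcoord_fischer_op[OF assms(1,2) \<open>j - p \<le> m\<close>, of a] assms(5) by auto
qed

lemma not_bij_betw_fischer_op:
  assumes "p \<ge> 1" "inj_on a {1..2 * p - 1}" "Determinant.det (Mmat m p a) = 0"
  shows "\<not> bij_betw (fischer_op p a) (homog_polys m) (homog_polys m)"
proof
  assume bij: "bij_betw (fischer_op p a) (homog_polys m) (homog_polys m)"
  have MT: "transpose_mat (Mmat m p a) \<in> carrier_mat (2 * p) (2 * p)"
    by (simp add: Mmat_eq)
  have "Determinant.det (transpose_mat (Mmat m p a)) = 0"
    using assms(3) by (simp add: det_transpose[OF Mmat_carrier])
  then obtain w where w: "w \<in> carrier_vec (2 * p)" "w \<noteq> 0\<^sub>v (2 * p)"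
    "transpose_mat (Mmat m p a) *\<^sub>v w = 0\<^sub>v (2 * p)"
    using det_0_iff_vec_prod_zero[OF MT] by blast
  define S where "S j = (\<Sum>r<2 * p. w $ r * Anode a r ^ j)" for j
  obtain j0 where j0: "j0 \<in> {p..m + p}" "S j0 \<noteq> 0"
    using exists_middle_power_sum_neq_0[OF assms(2) w] by (auto simp: S_def)
  then have "zmonom m (j0 - p) \<in> homog_polys m"
    by (intro homog_polys_zmonom) auto
  then obtain q where q: "q \<in> homog_polys m" "fischer_op p a q = zmonom m (j0 - p)"
    using bij by (metis bij_betw_iff_bijections)
  define c where "c = zcoord (m + 2 * p) (Pa p a * q)"
  have c: "c j = 0 \<longleftrightarrow> j \<noteq> j0" if "j \<in> {p..m + p}" for j
    using middle_zcoord_of_preimage_zmonom[OF assms(1) q(1) j0(1) q(2) that] by (simp add: c_def)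
  then have "(\<Sum>j\<in>{p..m + p}. c j * S j) = (\<Sum>j\<in>{j0}. c j * S j)"
    using j0(1) by (intro sum.mono_neutral_right) auto
  then show False
    using left_null_vector_middle_relation[OF assms(1) q(1) w(1,3)] j0 c[OF j0(1)]
    by (simp add: S_def c_def)
qed

section \<open>The estimate\<close>

lemma det_norm_le_fact:
  fixes A :: "'a::real_normed_field mat"
  assumes A: "A \<in> carrier_mat n n" and entries: "\<And>i j. i < n \<Longrightarrow> j < n \<Longrightarrow> norm (A $$ (i, j)) \<le> 1"
  shows "norm (Determinant.det A) \<le> fact n"
proof -
  have "norm (Determinant.det A)
      \<le> (\<Sum>\<pi>\<in>{\<pi>. \<pi> permutes {0..<n}}. norm (signof \<pi> * (\<Prod>i = 0..<n. A $$ (i, \<pi> i))))"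
    unfolding det_def'[OF A] by (rule norm_sum)
  also have "\<dots> \<le> (\<Sum>\<pi>\<in>{\<pi>. \<pi> permutes {0..<n}}. 1)"
  proof (rule sum_mono)
    fix \<pi>
    assume "\<pi> \<in> {\<pi>. \<pi> permutes {0..<n}}"
    then have "\<pi> i < n" if "i < n" for i
      using that permutes_in_image by fastforce
    then have "norm (\<Prod>i = 0..<n. A $$ (i, \<pi> i)) \<le> 1"
      unfolding prod_norm[symmetric] by (intro prod_le_1) (auto intro: entries)
    then show "norm (signof \<pi> * (\<Prod>i = 0..<n. A $$ (i, \<pi> i))) \<le> 1"
      by (simp add: norm_mult sign_def)
  qed
  also have "\<dots> = fact n"
    using card_permutations[of "{0..<n}" n] by simp
  finally show ?thesis .
qed

lemma adj_mat_norm_le_fact: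
  fixes A :: "'a::real_normed_field mat"
  assumes A: "A \<in> carrier_mat n n" and entries: "\<And>i j. i < n \<Longrightarrow> j < n \<Longrightarrow> norm (A $$ (i, j)) \<le> 1"
    and "k < n" "r < n"
  shows "norm (adj_mat A $$ (k, r)) \<le> fact (n - 1)"
proof -
  have "norm (adj_mat A $$ (k, r)) = norm (Determinant.det (mat_delete A r k))"
    using assms by (simp add: adj_mat_def cofactor_def norm_mult norm_power)
  also have "\<dots> \<le> fact (n - 1)"
    using A entries by (intro det_norm_le_fact[OF mat_delete_carrier[OF A]]) (auto simp: mat_delete_def)
  finally show ?thesis .
qed

lemma det_mult_index_eq_adj_mat_mult:
  fixes A :: "'a::comm_ring_1 mat"
  assumes A: "A \<in> carrier_mat n n" and h: "h \<in> carrier_vec n" and k: "k < n"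
  shows "Determinant.det A * h $ k = (\<Sum>r<n. adj_mat A $$ (k, r) * (A *\<^sub>v h) $ r)"
proof -
  have "(\<Sum>j = 0..<n. Determinant.det A * (if k = j then 1 else 0) * h $ j)
      = (\<Sum>j\<in>{k}. Determinant.det A * h $ j)"
    using k by (intro sum.mono_neutral_cong_right) auto
  then have "((adj_mat A * A) *\<^sub>v h) $ k = Determinant.det A * h $ k"
    using adj_mat(3)[OF A] h k by (simp add: scalar_prod_def one_mat_def)
  moreover have "(adj_mat A * A) *\<^sub>v h = adj_mat A *\<^sub>v (A *\<^sub>v h)"
    using adj_mat(1)[OF A] A h by (rule assoc_mult_mat_vec)
  ultimately show ?thesis
    using adj_mat(1)[OF A] A h k by (simp add: scalar_prod_def lessThan_atLeast0)
qed

lemma norm_Amap [simp]: "norm (Amap x) = 1"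
proof -
  have "cmod (complex_of_real x + \<i>) = cmod (complex_of_real x - \<i>)"
    by (simp add: cmod_def)
  then show ?thesis
    using of_real_minus_i_neq_0[of x] by (simp add: Amap_def norm_divide)
qed

lemma norm_Anode_power [simp]: "norm (Anode a r ^ n) = 1"
  by (simp add: Anode_def norm_power)

lemma norm_Mmat_index_le_1: "i < 2 * p \<Longrightarrow> j < 2 * p \<Longrightarrow> norm (Mmat m p a $$ (i, j)) \<le> 1"
  by (simp add: Mmat_eq)

lemma norm_outer_zcoord_le:
  fixes a :: "nat \<Rightarrow> real"
  assumes "p \<ge> 1" "q \<in> homog_polys m" "k < 2 * p"
  defines "c \<equiv> zcoord (m + 2 * p) (Pa p a * q)"
  shows "cmod (Determinant.det (Mmat m p a)) * cmod (c (outer_index m p k))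
    \<le> fact (2 * p) * (\<Sum>j\<in>{p..m + p}. cmod (c j))"
proof -
  define M where "M = Mmat m p a"
  define B where "B = (\<Sum>j\<in>{p..m + p}. cmod (c j))"
  define h where "h = vec (2 * p) (\<lambda>k. c (outer_index m p k))"
  have h: "h \<in> carrier_vec (2 * p)"
    by (simp add: h_def)
  have Mh: "cmod ((M *\<^sub>v h) $ r) \<le> B" if "r < 2 * p" for r
  proof -
    have "cmod ((M *\<^sub>v h) $ r) = cmod (\<Sum>j\<in>{p..m + p}. c j * Anode a r ^ j)"
      using Mmat_mult_outer_zcoords[OF assms(1,2) that] by (simp add: M_def h_def c_def)
    also have "\<dots> \<le> B"
      by (rule order_trans[OF norm_sum]) (simp add: B_def norm_mult)
    finally show ?thesis .
  qed
  have "cmod (Determinant.det M) * cmod (c (outer_index m p k))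
      = cmod (\<Sum>r<2 * p. adj_mat M $$ (k, r) * (M *\<^sub>v h) $ r)"
    using det_mult_index_eq_adj_mat_mult[OF Mmat_carrier h assms(3)] assms(3)
    by (simp add: M_def h_def flip: norm_mult)
  also have "\<dots> \<le> (\<Sum>r<2 * p. fact (2 * p - 1) * B)"
    using adj_mat_norm_le_fact[OF Mmat_carrier norm_Mmat_index_le_1 assms(3)] Mh
    by (intro order_trans[OF norm_sum] sum_mono) (auto simp: norm_mult M_def intro: mult_mono)
  also have "\<dots> = fact (2 * p) * B"
    using assms(1) fact_reduce[of "2 * p", where 'a=real] by simp
  finally show ?thesis
    by (simp add: M_def B_def)
qed

lemma sum_inverse_squares_le: "n \<ge> 1 \<Longrightarrow> (\<Sum>j\<in>{1..n}. 1 / (real j)\<^sup>2) \<le> 2 - 1 / real n"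
proof (induction n rule: dec_induct)
  case (step n)
  have "1 / (real n + 1)\<^sup>2 \<le> 1 / (real n * (real n + 1))"
    using step(1) by (intro frac_le) (auto simp: power2_eq_square)
  also have "\<dots> = 1 / real n - 1 / (real n + 1)"
    using step(1) by (simp add: field_simps)
  finally show ?case
    using step(3) by (simp add: add.commute)
qed simp

lemma sum_inverse_squares_subset_le:
  assumes "A \<subseteq> {1..n}"
  shows "(\<Sum>j\<in>A. 1 / (real j)\<^sup>2) \<le> 2"
proof -
  have "(\<Sum>j\<in>A. 1 / (real j)\<^sup>2) \<le> (\<Sum>j\<in>{1..n}. 1 / (real j)\<^sup>2)"
    using assms by (intro sum_mono2) auto
  also have "\<dots> \<le> 2"
  proof (cases "n \<ge> 1")
    case True
    have "0 \<le> 1 / real n"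
      by simp
    then show ?thesis
      using sum_inverse_squares_le[OF True] by linarith
  qed simp
  finally show ?thesis .
qed

lemma ffact_ge:
  assumes "1 \<le> p" "p \<le> n"
  shows "(real n / real p) ^ p \<le> real (ffact n p)"
proof -
  have "real n / real p \<le> real (n - t)" if "t < p" for t
  proof -
    have "n - p \<le> p * (n - p)"
      using assms(1) by simp
    then have "n \<le> p * (n - p) + p"
      using assms(2) by linarith
    also have "\<dots> = p * (n - p + 1)"
      by (simp add: algebra_simps)
    also have "\<dots> \<le> p * (n - t)"
      using that assms by (intro mult_le_mono2) linarith
    finally have "real n \<le> real p * real (n - t)"
      by (metis of_nat_le_iff of_nat_mult)
    then show ?thesis
      using assms by (simp add: pos_divide_le_eq mult.commute del: of_nat_diff)
  qed
  then have "(\<Prod>t<p. real n / real p) \<le> (\<Prod>t<p. real (n - t))"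
    by (intro prod_mono) auto
  then show ?thesis
    by (simp add: ffact_def)
qed

lemma fact_add_le: "fact (m + k) \<le> (fact m :: real) * real (m + k) ^ k"
proof (induction k)
  case (Suc k)
  have "fact (m + Suc k) = real (m + Suc k) * (fact (m + k) :: real)"
    by simp
  also have "\<dots> \<le> real (m + Suc k) * (fact m * real (m + k) ^ k)"
    using Suc by (intro mult_left_mono) auto
  also have "\<dots> \<le> real (m + Suc k) * (fact m * real (m + Suc k) ^ k)"
    by (intro mult_left_mono power_mono) auto
  also have "\<dots> = fact m * real (m + Suc k) ^ Suc k"
    by simp
  finally show ?case .
qed simp

lemma inverse_square_mult_le:
  fixes x y :: real
  assumes "x > 0" "y > 0"
  shows "1 / (x * y)\<^sup>2 \<le> 2 / (x + y)\<^sup>2 * (1 / x\<^sup>2 + 1 / y\<^sup>2)"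
proof -
  have "1 / (x * y) = 1 / (x + y) * (1 / x + 1 / y)"
    using assms by (simp add: field_simps)
  moreover have "(1 / x + 1 / y)\<^sup>2 \<le> 2 * ((1 / x)\<^sup>2 + (1 / y)\<^sup>2)"
    using sum_squares_bound[of "1 / x" "1 / y"] by (simp add: power2_sum)
  ultimately have "(1 / (x * y))\<^sup>2 \<le> (1 / (x + y))\<^sup>2 * (2 * ((1 / x)\<^sup>2 + (1 / y)\<^sup>2))"
    by (simp only: power_mult_distrib) (intro mult_left_mono, auto)
  then show ?thesis
    by (simp add: power_divide)
qed

lemma sum_inverse_square_mult_le:
  assumes "p \<ge> 1"
  shows "(\<Sum>j\<in>{p..m + p}. 1 / (real j * real (m + 2 * p - j))\<^sup>2) \<le> 8 / (real (m + 2 * p))\<^sup>2"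
proof -
  define N where "N = m + 2 * p"
  have "(\<Sum>j\<in>{p..m + p}. 1 / (real j * real (N - j))\<^sup>2)
      \<le> (\<Sum>j\<in>{p..m + p}. 2 / (real N)\<^sup>2 * (1 / (real j)\<^sup>2 + 1 / (real (N - j))\<^sup>2))"
  proof (rule sum_mono)
    fix j
    assume "j \<in> {p..m + p}"
    then have "real j + real (N - j) = real N" "real j > 0" "real (N - j) > 0"
      using assms by (auto simp: N_def)
    then show "1 / (real j * real (N - j))\<^sup>2 \<le> 2 / (real N)\<^sup>2 * (1 / (real j)\<^sup>2 + 1 / (real (N - j))\<^sup>2)"
      using inverse_square_mult_le[of "real j" "real (N - j)"] by simp
  qed
  also have "\<dots> = 2 / (real N)\<^sup>2
      * ((\<Sum>j\<in>{p..m + p}. 1 / (real j)\<^sup>2) + (\<Sum>j\<in>{p..m + p}. 1 / (real (N - j))\<^sup>2))"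
    by (simp only: sum.distrib[symmetric] sum_distrib_left)
  also have "\<dots> \<le> 2 / (real N)\<^sup>2 * (2 + 2)"
  proof (intro mult_left_mono add_mono)
    show "(\<Sum>j\<in>{p..m + p}. 1 / (real j)\<^sup>2) \<le> 2"
      using assms by (intro sum_inverse_squares_subset_le[of _ N]) (auto simp: N_def)
    have "(\<Sum>j\<in>{p..m + p}. 1 / (real (N - j))\<^sup>2) = (\<Sum>s\<in>(\<lambda>j. N - j) ` {p..m + p}. 1 / (real s)\<^sup>2)"
      by (rule sum.reindex[symmetric, unfolded o_def]) (auto simp: N_def inj_on_def)
    also have "\<dots> \<le> 2"
      using assms by (intro sum_inverse_squares_subset_le[of _ N]) (auto simp: N_def)
    finally show "(\<Sum>j\<in>{p..m + p}. 1 / (real (N - j))\<^sup>2) \<le> 2" .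
  qed auto
  finally show ?thesis
    by (simp add: N_def)
qed

lemma lap_factor_ge:
  assumes "p \<ge> 1" "j \<in> {p..m + p}"
  shows "(4 * (real j * real (m + 2 * p - j)) / (real p)\<^sup>2) ^ p \<le> real (lap_factor p (m + 2 * p) j)"
proof -
  have "(real j / real p) ^ p \<le> real (ffact j p)"
    using assms by (intro ffact_ge) auto
  moreover have "(real (m + 2 * p - j) / real p) ^ p \<le> real (ffact (m + 2 * p - j) p)"
    using assms by (intro ffact_ge) auto
  ultimately have "4 ^ p * ((real j / real p) ^ p * (real (m + 2 * p - j) / real p) ^ p)
      \<le> 4 ^ p * (real (ffact j p) * real (ffact (m + 2 * p - j) p))"
    by (intro mult_left_mono mult_mono) auto
  then show ?thesis
    by (simp add: lap_factor_def power_mult_distrib power_divide power2_eq_square field_simps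
        flip: power_mult)
qed

lemma power_even_split:
  fixes x :: "'a::monoid_mult"
  assumes "p \<ge> 1"
  shows "x ^ (2 * p) = x\<^sup>2 * x ^ (2 * p - 2)"
proof -
  have "2 * p = 2 + (2 * p - 2)"
    using assms by simp
  then show ?thesis
    by (metis power_add)
qed

definition lap_const :: "nat \<Rightarrow> real" where
  "lap_const p = (real p ^ 4 / 2) * (real p ^ 2 / 2) ^ (2 * p - 2)"

lemma inverse_square_lap_factor_le:
  assumes "p \<ge> 1" "j \<in> {p..m + p}"
  defines "N \<equiv> real (m + 2 * p)" and "X \<equiv> real j * real (m + 2 * p - j)"
  shows "1 / (real (lap_factor p (m + 2 * p) j))\<^sup>2
    \<le> (real p ^ 4 / 16) * (real p ^ 2 / (2 * N)) ^ (2 * p - 2) / X\<^sup>2"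
proof -
  define u v where "u = real j" and "v = real (m + 2 * p - j)"
  have "u \<ge> 1" "v \<ge> 1" "N = u + v" "X = u * v"
    using assms(1,2) by (auto simp: u_def v_def N_def X_def)
  moreover from this have "u * v \<ge> u + v - 1"
    using mult_nonneg_nonneg[of "u - 1" "v - 1"] by (simp add: algebra_simps)
  ultimately have XN: "N / 2 \<le> X"
    by linarith
  have Npos: "N > 0"
    using assms(1) by (simp add: N_def)
  define Y where "Y = 4 * X / (real p)\<^sup>2"
  have Ypos: "Y > 0"
    using XN Npos assms(1) by (simp add: Y_def)
  have "(Y ^ p)\<^sup>2 \<le> (real (lap_factor p (m + 2 * p) j))\<^sup>2"
    using lap_factor_ge[OF assms(1,2)] Ypos by (intro power_mono) (auto simp: Y_def X_def)
  moreover have "(Y ^ p)\<^sup>2 = Y\<^sup>2 * Y ^ (2 * p - 2)"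
    using power_even_split[OF assms(1), of Y] by (simp flip: power_mult add: mult.commute)
  moreover have "(2 * N / (real p)\<^sup>2) ^ (2 * p - 2) \<le> Y ^ (2 * p - 2)"
    unfolding Y_def using XN Npos by (intro power_mono divide_right_mono) auto
  ultimately have low:
    "Y\<^sup>2 * (2 * N / (real p)\<^sup>2) ^ (2 * p - 2) \<le> (real (lap_factor p (m + 2 * p) j))\<^sup>2"
    using Ypos by (smt (verit) mult_left_mono zero_le_power2)
  have "1 / (real (lap_factor p (m + 2 * p) j))\<^sup>2 \<le> 1 / (Y\<^sup>2 * (2 * N / (real p)\<^sup>2) ^ (2 * p - 2))"
    using low Ypos Npos assms(1) by (intro frac_le) auto
  also have "\<dots> = (real p ^ 4 / 16) * (real p ^ 2 / (2 * N)) ^ (2 * p - 2) / X\<^sup>2"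
    unfolding Y_def using XN Npos assms(1)
    by (simp add: field_simps power_divide power2_eq_square power4_eq_xxxx)
  finally show ?thesis .
qed

lemma sum_inverse_square_lap_factor_le:
  assumes "p \<ge> 1"
  shows "(\<Sum>j\<in>{p..m + p}. 1 / (real (lap_factor p (m + 2 * p) j))\<^sup>2)
    \<le> lap_const p / real (m + 2 * p) ^ (2 * p)"
proof -
  define N where "N = real (m + 2 * p)"
  have Npos: "N > 0"
    using assms by (simp add: N_def)
  define B where "B = (real p ^ 4 / 16) * (real p ^ 2 / (2 * N)) ^ (2 * p - 2)"
  have "(\<Sum>j\<in>{p..m + p}. 1 / (real (lap_factor p (m + 2 * p) j))\<^sup>2)
      \<le> (\<Sum>j\<in>{p..m + p}. B * (1 / (real j * real (m + 2 * p - j))\<^sup>2))"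
    using inverse_square_lap_factor_le[OF assms] by (intro sum_mono) (simp add: B_def N_def)
  also have "\<dots> = B * (\<Sum>j\<in>{p..m + p}. 1 / (real j * real (m + 2 * p - j))\<^sup>2)"
    by (simp add: sum_distrib_left)
  also have "\<dots> \<le> B * (8 / N\<^sup>2)"
    using sum_inverse_square_mult_le[OF assms, of m] Npos
    by (intro mult_left_mono) (auto simp: B_def N_def)
  also have "\<dots> = lap_const p / N ^ (2 * p)"
  proof -
    show ?thesis
      using power_even_split[OF assms, of N]
      unfolding B_def lap_const_def using Npos
      by (simp add: field_simps power_divide power_mult_distrib)
  qed
  finally show ?thesis
    by (simp add: N_def)
qed

lemma middle_coeff_bounds:
  fixes c d :: "nat \<Rightarrow> complex" and lam :: "nat \<Rightarrow> nat"
  assumes pos: "\<And>j. j \<in> {p..m + p} \<Longrightarrow> lam j > 0"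
    and cd: "\<And>i. i \<le> m \<Longrightarrow> d i = c (i + p) * of_nat (lam (i + p))"
  defines "T \<equiv> (\<Sum>j\<in>{p..m + p}. 1 / (real (lam j))\<^sup>2)" and "D \<equiv> (\<Sum>i\<le>m. (cmod (d i))\<^sup>2)"
  shows "(\<Sum>j\<in>{p..m + p}. (cmod (c j))\<^sup>2) \<le> T * D"
    and "(\<Sum>j\<in>{p..m + p}. cmod (c j))\<^sup>2 \<le> T * D"
proof -
  define t where "t j = 1 / real (lam j)" for j
  have c: "cmod (c j) = cmod (d (j - p)) * t j" if "j \<in> {p..m + p}" for j
    using cd[of "j - p"] pos[OF that] that by (auto simp: t_def norm_mult field_simps)
  have T: "T = (\<Sum>j\<in>{p..m + p}. (t j)\<^sup>2)"
    by (simp add: T_def t_def power_divide)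
  have D: "D = (\<Sum>j\<in>{p..m + p}. (cmod (d (j - p)))\<^sup>2)"
    using sum.shift_bounds_cl_nat_ivl[of "\<lambda>j. (cmod (d (j - p)))\<^sup>2" 0 p m]
    by (simp add: D_def atLeast0AtMost)
  have "(\<Sum>j\<in>{p..m + p}. (cmod (c j))\<^sup>2) = (\<Sum>j\<in>{p..m + p}. (cmod (d (j - p)))\<^sup>2 * (t j)\<^sup>2)"
    by (rule sum.cong) (auto simp: c power_mult_distrib)
  also have "\<dots> \<le> (\<Sum>j\<in>{p..m + p}. (cmod (d (j - p)))\<^sup>2 * T)"
    unfolding T by (intro sum_mono mult_left_mono member_le_sum) auto
  also have "\<dots> = T * D"
    by (simp add: D sum_distrib_left ac_simps)
  finally show "(\<Sum>j\<in>{p..m + p}. (cmod (c j))\<^sup>2) \<le> T * D" .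
  have "(\<Sum>j\<in>{p..m + p}. cmod (c j))\<^sup>2 = (\<Sum>j\<in>{p..m + p}. cmod (d (j - p)) * t j)\<^sup>2"
    by (simp add: c)
  also have "\<dots> \<le> (\<Sum>j\<in>{p..m + p}. (cmod (d (j - p)))\<^sup>2) * (\<Sum>j\<in>{p..m + p}. (t j)\<^sup>2)"
    by (rule Cauchy_Schwarz_ineq_sum)
  finally show "(\<Sum>j\<in>{p..m + p}. cmod (c j))\<^sup>2 \<le> T * D"
    by (simp add: T D mult.commute)
qed

lemma middle_zcoord_Pa_mult_bounds:
  fixes a :: "nat \<Rightarrow> real"
  assumes p: "p \<ge> 1" and q: "q \<in> homog_polys m"
  defines "c \<equiv> zcoord (m + 2 * p) (Pa p a * q)"
    and "T \<equiv> (\<Sum>j\<in>{p..m + p}. 1 / (real (lap_factor p (m + 2 * p) j))\<^sup>2)"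
    and "D \<equiv> (\<Sum>i\<le>m. (cmod (zcoord m (fischer_op p a q) i))\<^sup>2)"
  shows "(\<Sum>j\<in>{p..m + p}. (cmod (c j))\<^sup>2) \<le> T * D"
    and "(\<Sum>j\<in>{p..m + p}. cmod (c j))\<^sup>2 \<le> T * D"
proof -
  have "lap_factor p (m + 2 * p) j > 0" if "j \<in> {p..m + p}" for j
    using that by (auto simp: lap_factor_pos_iff)
  moreover have "zcoord m (fischer_op p a q) i = c (i + p) * of_nat (lap_factor p (m + 2 * p) (i + p))"
    if "i \<le> m" for i
    using zcoord_fischer_op[OF p q that] by (simp add: c_def)
  ultimately show "(\<Sum>j\<in>{p..m + p}. (cmod (c j))\<^sup>2) \<le> T * D"
    and "(\<Sum>j\<in>{p..m + p}. cmod (c j))\<^sup>2 \<le> T * D"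
    using middle_coeff_bounds by (auto simp: T_def D_def)
qed

lemma sum_norm_square_zcoord_Pa_mult_le:
  fixes a :: "nat \<Rightarrow> real"
  assumes p: "p \<ge> 1" and q: "q \<in> homog_polys m" and det: "Determinant.det (Mmat m p a) \<noteq> 0"
  defines "c \<equiv> zcoord (m + 2 * p) (Pa p a * q)"
    and "T \<equiv> (\<Sum>j\<in>{p..m + p}. 1 / (real (lap_factor p (m + 2 * p) j))\<^sup>2)"
    and "D \<equiv> (\<Sum>i\<le>m. (cmod (zcoord m (fischer_op p a q) i))\<^sup>2)"
    and "\<delta> \<equiv> cmod (Determinant.det (Mmat m p a))"
  shows "(\<Sum>j\<le>m + 2 * p. (cmod (c j))\<^sup>2) \<le> (2 * real p + 1) * (fact (2 * p))\<^sup>2 * T * D / \<delta>\<^sup>2"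
proof -
  define F where "F = (fact (2 * p) :: real)"
  define B where "B = F\<^sup>2 * (T * D) / \<delta>\<^sup>2"
  note middle = middle_zcoord_Pa_mult_bounds[OF p q, of a, folded c_def T_def D_def]
  have \<delta>: "\<delta> > 0" "\<delta> \<le> F"
    using det det_norm_le_fact[OF Mmat_carrier norm_Mmat_index_le_1] by (auto simp: \<delta>_def F_def)
  have "0 \<le> T * D"
    unfolding T_def D_def by (intro mult_nonneg_nonneg sum_nonneg) auto
  moreover have "1 \<le> F\<^sup>2 / \<delta>\<^sup>2"
    using \<delta> by (simp add: power_mono)
  ultimately have middle_le: "(\<Sum>j\<in>{p..m + p}. (cmod (c j))\<^sup>2) \<le> B"
    using middle(1) mult_right_mono[of 1 "F\<^sup>2 / \<delta>\<^sup>2" "T * D"] by (simp add: B_def)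
  have outer_le: "(cmod (c (outer_index m p k)))\<^sup>2 \<le> B" if "k < 2 * p" for k
  proof -
    have "(\<delta> * cmod (c (outer_index m p k)))\<^sup>2 \<le> (F * (\<Sum>j\<in>{p..m + p}. cmod (c j)))\<^sup>2"
      using norm_outer_zcoord_le[OF p q that, of a] \<delta>
      by (intro power_mono) (auto simp: \<delta>_def F_def c_def)
    also have "\<dots> \<le> F\<^sup>2 * (T * D)"
      using middle(2) by (simp add: power_mult_distrib mult_left_mono)
    finally show ?thesis
      using \<delta> by (simp add: B_def field_simps power_mult_distrib)
  qed
  have "(\<Sum>j\<le>m + 2 * p. (cmod (c j))\<^sup>2)
      = (\<Sum>k<2 * p. (cmod (c (outer_index m p k)))\<^sup>2) + (\<Sum>j\<in>{p..m + p}. (cmod (c j))\<^sup>2)"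
    by (rule sum_atMost_split_outer_middle)
  also have "\<dots> \<le> (\<Sum>k<2 * p. B) + B"
    using outer_le middle_le by (intro add_mono sum_mono) auto
  also have "\<dots> = (2 * real p + 1) * F\<^sup>2 * T * D / \<delta>\<^sup>2"
    by (simp add: B_def field_simps add_divide_distrib)
  finally show ?thesis
    by (simp add: F_def)
qed

definition fischer_const :: "nat \<Rightarrow> real" where
  "fischer_const p = (2 * real p + 1) * (fact (2 * p))\<^sup>2 * lap_const p"

text \<open>The factor N!/m! between the squared Fischer norms of P_a q and of F_a q grows like N^(2p)
  and is compensated by the bound on the sum of 1/lap_factor^2; this is why the constant does not
  depend on m.\<close>

lemma fischer_norm_Pa_mult_le:
  assumes p: "p \<ge> 1" and q: "q \<in> homog_polys m" and det: "Determinant.det (Mmat m p a) \<noteq> 0"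
  shows "fischer_norm (Pa p a * q)
    \<le> sqrt (fischer_const p) / cmod (Determinant.det (Mmat m p a)) * fischer_norm (fischer_op p a q)"
proof -
  define N where "N = m + 2 * p"
  define c where "c = zcoord N (Pa p a * q)"
  define T where "T = (\<Sum>j\<in>{p..m + p}. 1 / (real (lap_factor p N j))\<^sup>2)"
  define D where "D = (\<Sum>i\<le>m. (cmod (zcoord m (fischer_op p a q) i))\<^sup>2)"
  define \<delta> where "\<delta> = cmod (Determinant.det (Mmat m p a))"
  have \<delta>: "\<delta> > 0"
    using det by (simp add: \<delta>_def)
  have D: "D \<ge> 0"
    by (auto simp: D_def intro!: sum_nonneg)
  have "fact N * (\<Sum>j\<le>N. (cmod (c j))\<^sup>2) \<le> fact N * ((2 * real p + 1) * (fact (2 * p))\<^sup>2 * T * D / \<delta>\<^sup>2)"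
    using sum_norm_square_zcoord_Pa_mult_le[OF p q det]
    by (intro mult_left_mono) (simp_all add: N_def c_def T_def D_def \<delta>_def)
  also have "\<dots>
      \<le> fact N * ((2 * real p + 1) * (fact (2 * p))\<^sup>2 * (lap_const p / real N ^ (2 * p)) * D / \<delta>\<^sup>2)"
    using sum_inverse_square_lap_factor_le[OF p, of m] D
    by (intro mult_left_mono divide_right_mono mult_right_mono) (auto simp: T_def N_def)
  also have "\<dots> = fact N / real N ^ (2 * p) * (fischer_const p / \<delta>\<^sup>2) * D"
    by (simp add: fischer_const_def field_simps)
  also have "\<dots> \<le> fact m * (fischer_const p / \<delta>\<^sup>2) * D"
    using fact_add_le[of m "2 * p"] p D
    by (intro mult_right_mono) (auto simp: N_def field_simps fischer_const_def lap_const_def)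
  finally have "pi * (fact N * (\<Sum>j\<le>N. (cmod (c j))\<^sup>2)) \<le> pi * (fact m * (fischer_const p / \<delta>\<^sup>2) * D)"
    by (rule mult_left_mono) simp
  then have "pi * fact N * (\<Sum>j\<le>N. (cmod (c j))\<^sup>2) \<le> (fischer_const p / \<delta>\<^sup>2) * (pi * fact m * D)"
    by (simp only: ac_simps)
  then have "fischer_norm (Pa p a * q) \<le> sqrt ((fischer_const p / \<delta>\<^sup>2) * (pi * fact m * D))"
    using fischer_norm_zcomb[of N c] zcomb_zcoord_Pa_mult[OF p q] by (simp add: N_def c_def)
  also have "\<dots> = sqrt (fischer_const p) / \<delta> * fischer_norm (fischer_op p a q)"
    using fischer_norm_zcomb[of m "zcoord m (fischer_op p a q)"]
      zcomb_zcoord[OF fischer_op_in_homog_polys[OF p q]] \<delta>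
    by (simp add: D_def real_sqrt_mult real_sqrt_divide)
  finally show ?thesis
    by (simp add: \<delta>_def)
qed

theorem theorem4p1:
  fixes p :: nat and a :: "nat \<Rightarrow> real"
  assumes "p \<ge> 1"
    and "inj_on a {1..2*p-1}"
    and "\<forall>j\<in>{1..2*p-1}. a j \<noteq> 0"
  shows "(\<forall>m::nat. bij_betw (\<lambda>q. (laplace ^^ p) (Pa p a * q)) (homog_polys m) (homog_polys m)
            \<longleftrightarrow> Determinant.det (Mmat m p a) \<noteq> 0)
       \<and> (\<exists>C::real. C \<ge> 0 \<and> (\<forall>m::nat. Determinant.det (Mmat m p a) \<noteq> 0 \<longrightarrow>
            (\<forall>q\<in>homog_polys m. fischer_norm (Pa p a * q)
               \<le> C / cmod (Determinant.det (Mmat m p a)) * fischer_norm ((laplace ^^ p) (Pa p a * q)))))"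
proof -
  have "(\<lambda>q. (laplace ^^ p) (Pa p a * q)) = fischer_op p a"
    by (simp add: fun_eq_iff fischer_op_def)
  moreover have "bij_betw (fischer_op p a) (homog_polys m) (homog_polys m)
      \<longleftrightarrow> Determinant.det (Mmat m p a) \<noteq> 0" for m
    using bij_betw_fischer_op[OF assms(1)] not_bij_betw_fischer_op[OF assms(1,2)] by blast
  moreover have "sqrt (fischer_const p) \<ge> 0"
    by (simp add: fischer_const_def lap_const_def)
  ultimately show ?thesis
    using fischer_norm_Pa_mult_le[OF assms(1)] unfolding fischer_op_def by blast
qed

end
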